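(* Let $\beta_1,\beta_2,\gamma_1,\gamma_2>0$ and $0<\sigma_{21}\le\sigma_{12}\le1$ be fixed, and for $\mu>0$ set $\mathcal R_i=\beta_i/(\gamma_i+\mu)$. Then there exists $\mu^*\in(0,\min\{\gamma_1,\gamma_2\})$ such that for all $0<\mu<\mu^*$: (i) If $(\mathcal R_1,\mathcal R_2)\in\Omega^\mu$, then system (M) has a unique feasible steady state with $I_1^*>0$ and $I_2^*>0$, and it satisfies $S^*=s_0+\mathcal O(\mu)$ and $I_i^*=\mu b_i+\mathcal O(\mu^2)$ for $i=1,2$ as $\mu\to0^+$, where $s_0$ is the positive root of $p_s(s)=as^2+bs+c$ and $$b_1=\frac{s_0+\sigma_{12}(1-s_0)}{\gamma_1\sigma_{12}}(1-\mathcal R_2s_0),\qquad b_2=\frac{s_0+\sigma_{21}(1-s_0)}{\gamma_2\sigma_{21}}(1-\mathcal R_1s_0).$$ (ii) If $(\mathcal R_1,\mathcal R_2)\notin\Omega^\mu$, then system (M) has no steady state with $I_1^*>0$ and $I_2^*>0$ that is feasible.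
   Context: System (M) is the two-strain epidemic model for $(S,I_1,I_2,J_1,J_2,R_1,R_2,R_3)$ (the letters $R_1,R_2,R_3$ denote compartments, while $\mathcal R_1,\mathcal R_2$ denote numbers): $S'=\mu-\beta_1(I_1+J_1)S-\beta_2(I_2+J_2)S-\mu S$, $I_1'=\beta_1S(I_1+J_1)-(\mu+\gamma_1)I_1$, $I_2'=\beta_2S(I_2+J_2)-(\mu+\gamma_2)I_2$, $J_1'=\beta_1\sigma_{21}R_2(I_1+J_1)-(\mu+\gamma_1)J_1$, $J_2'=\beta_2\sigma_{12}R_1(I_2+J_2)-(\mu+\gamma_2)J_2$, $R_1'=\gamma_1I_1-\beta_2\sigma_{12}(I_2+J_2)R_1-\mu R_1$, $R_2'=\gamma_2I_2-\beta_1\sigma_{21}(I_1+J_1)R_2-\mu R_2$, $R_3'=\gamma_1J_1+\gamma_2J_2-\mu R_3$. A steady state is a zero of the right-hand side; it is feasible if all components are nonnegative and sum to 1. For $\mu\ge 0$, $\Omega^\mu=\Omega^\mu_1\cap\Omega^\mu_2$ where, for $\{i,j\}=\{1,2\}$, $\Omega^\mu_i=\left\{(\mathcal R_1,\mathcal R_2):\ \mathcal R_i>1,\ \mathcal R_j>\dfrac{(\gamma_i+\mu)\mathcal R_i}{(1+\sigma_{ij}(\mathcal R_i-1))\gamma_i+\mu}\right\}$. The quadratic $p_s(s)=as^2+bs+c$ has coefficients $a=\sigma_{12}(1-\sigma_{21})\mathcal R_1+\sigma_{21}(1-\sigma_{12})\mathcal R_2$, $b=\sigma_{12}\sigma_{21}(\mathcal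 R_1+\mathcal R_2)-(\sigma_{12}+\sigma_{21}-\sigma_{12}\sigma_{21})$, $c=-\sigma_{12}\sigma_{21}$; when $a>0$ it has exactly one positive root since $c<0$ (when $a=0$, i.e. $\sigma_{12}=\sigma_{21}=1$, $s_0=1/(\mathcal R_1+\mathcal R_2-1)$). *)

theory Defs
  imports Complex_Main
begin

text \<open>State vector (S, I1, I2, J1, J2, R1, R2, R3).\<close>
type_synonym state = "real \<times> real \<times> real \<times> real \<times> real \<times> real \<times> real \<times> real"

definition steady_state ::
  "real \<Rightarrow> real \<Rightarrow> real \<Rightarrow> real \<Rightarrow> real \<Rightarrow> real \<Rightarrow> real \<Rightarrow> state \<Rightarrow> bool" where
  "steady_state \<beta>1 \<beta>2 \<gamma>1 \<gamma>2 \<sigma>12 \<sigma>21 \<mu> x \<longleftrightarrow>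
     (case x of (S, I1, I2, J1, J2, R1, R2, R3) \<Rightarrow>
        \<mu> - \<beta>1 * (I1 + J1) * S - \<beta>2 * (I2 + J2) * S - \<mu> * S = 0 \<and>
        \<beta>1 * S * (I1 + J1) - (\<mu> + \<gamma>1) * I1 = 0 \<and>
        \<beta>2 * S * (I2 + J2) - (\<mu> + \<gamma>2) * I2 = 0 \<and>
        \<beta>1 * \<sigma>21 * R2 * (I1 + J1) - (\<mu> + \<gamma>1) * J1 = 0 \<and>
        \<beta>2 * \<sigma>12 * R1 * (I2 + J2) - (\<mu> + \<gamma>2) * J2 = 0 \<and>
        \<gamma>1 * I1 - \<beta>2 * \<sigma>12 * (I2 + J2) * R1 - \<mu> * R1 = 0 \<and>
        \<gamma>2 * I2 - \<beta>1 * \<sigma>21 * (I1 + J1) * R2 - \<mu> * R2 = 0 \<and>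
        \<gamma>1 * J1 + \<gamma>2 * J2 - \<mu> * R3 = 0)"

definition feasible :: "state \<Rightarrow> bool" where
  "feasible x \<longleftrightarrow>
     (case x of (S, I1, I2, J1, J2, R1, R2, R3) \<Rightarrow>
        S \<ge> 0 \<and> I1 \<ge> 0 \<and> I2 \<ge> 0 \<and> J1 \<ge> 0 \<and> J2 \<ge> 0 \<and> R1 \<ge> 0 \<and> R2 \<ge> 0 \<and> R3 \<ge> 0 \<and>
        S + I1 + I2 + J1 + J2 + R1 + R2 + R3 = 1)"

definition I1_of :: "state \<Rightarrow> real" where
  "I1_of x = (case x of (S, I1, I2, J1, J2, R1, R2, R3) \<Rightarrow> I1)"
definition I2_of :: "state \<Rightarrow> real" where
  "I2_of x = (case x of (S, I1, I2, J1, J2, R1, R2, R3) \<Rightarrow> I2)"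
definition S_of :: "state \<Rightarrow> real" where
  "S_of x = (case x of (S, I1, I2, J1, J2, R1, R2, R3) \<Rightarrow> S)"

definition repr_num :: "real \<Rightarrow> real \<Rightarrow> real \<Rightarrow> real" where
  "repr_num \<beta> \<gamma> \<mu> = \<beta> / (\<gamma> + \<mu>)"

definition Omega_i :: "real \<Rightarrow> real \<Rightarrow> real \<Rightarrow> real \<Rightarrow> real \<Rightarrow> bool" where
  "Omega_i \<mu> \<gamma>i \<sigma>ij Ri Rj \<longleftrightarrow>
     Ri > 1 \<and> Rj > (\<gamma>i + \<mu>) * Ri / ((1 + \<sigma>ij * (Ri - 1)) * \<gamma>i + \<mu>)"

definition Omega :: "real \<Rightarrow> real \<Rightarrow> real \<Rightarrow> real \<Rightarrow> real \<Rightarrow> real \<Rightarrow> real \<Rightarrow> bool" where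
  "Omega \<mu> \<gamma>1 \<gamma>2 \<sigma>12 \<sigma>21 R1 R2 \<longleftrightarrow>
     Omega_i \<mu> \<gamma>1 \<sigma>12 R1 R2 \<and> Omega_i \<mu> \<gamma>2 \<sigma>21 R2 R1"

definition ps_a :: "real \<Rightarrow> real \<Rightarrow> real \<Rightarrow> real \<Rightarrow> real" where
  "ps_a \<sigma>12 \<sigma>21 R1 R2 = \<sigma>12 * (1 - \<sigma>21) * R1 + \<sigma>21 * (1 - \<sigma>12) * R2"
definition ps_b :: "real \<Rightarrow> real \<Rightarrow> real \<Rightarrow> real \<Rightarrow> real" where
  "ps_b \<sigma>12 \<sigma>21 R1 R2 = \<sigma>12 * \<sigma>21 * (R1 + R2) - (\<sigma>12 + \<sigma>21 - \<sigma>12 * \<sigma>21)"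
definition ps_c :: "real \<Rightarrow> real \<Rightarrow> real" where
  "ps_c \<sigma>12 \<sigma>21 = - \<sigma>12 * \<sigma>21"

definition s0 :: "real \<Rightarrow> real \<Rightarrow> real \<Rightarrow> real \<Rightarrow> real" where
  "s0 \<sigma>12 \<sigma>21 R1 R2 = (THE s. s > 0 \<and>
     ps_a \<sigma>12 \<sigma>21 R1 R2 * s\<^sup>2 + ps_b \<sigma>12 \<sigma>21 R1 R2 * s + ps_c \<sigma>12 \<sigma>21 = 0)"

end

theory Submission
  imports Defs
begin

text \<open>Eliminating the recovered and reinfected classes reduces a steady state with
  \<open>I\<^sub>1, I\<^sub>2 > 0\<close> to a root \<open>S\<close> of a cubic \<open>F\<^sub>\<mu>\<close> in \<open>(0, min {1, 1/\<R>\<^sub>1, 1/\<R>\<^sub>2})\<close>,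
  with \<open>I\<^sub>1, I\<^sub>2\<close> rational functions of \<open>S\<close>; conversely every such root is a feasible steady
  state. Since \<open>F\<^sub>\<mu>(0) < 0\<close> and, for small \<open>\<mu>\<close>, \<open>F\<^sub>\<mu>\<close> is either a cubic with negative leading
  coefficient or uniformly close to a quadratic that is negative on \<open>[0, 1]\<close>, it changes sign
  exactly once on \<open>(0, 1]\<close>. So there is at most one such steady state, and there is one iff the
  sign change lies below \<open>1/\<R>\<^sub>1\<close> and \<open>1/\<R>\<^sub>2\<close>, which is exactly \<open>(\<R>\<^sub>1, \<R>\<^sub>2) \<in> \<Omega>\<^sup>\<mu>\<close>.
  Finally \<open>F = F_main + \<mu> F_rem\<close> with \<open>F_rem\<close> bounded and \<open>F_main\<close> a positive multiple of
  \<open>p\<^sub>s\<close> (for the current \<open>\<R>\<^sub>i\<close>), so the root is within \<open>O(\<mu>)\<close> of \<open>s\<^sub>0\<close>, and the rational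
  formulas give \<open>I\<^sub>i = \<mu> b\<^sub>i + O(\<mu>\<^sup>2)\<close>.\<close>

lemma mult_le_by_le_one: "0 \<le> (x::real) \<Longrightarrow> x \<le> 1 \<Longrightarrow> 0 \<le> y \<Longrightarrow> y \<le> Y \<Longrightarrow> x * y \<le> Y"
  by (metis mult_left_le_one_le order_trans)

lemma abs_mult_le_by_le_one: "\<bar>x::real\<bar> \<le> 1 \<Longrightarrow> \<bar>y\<bar> \<le> Y \<Longrightarrow> \<bar>x * y\<bar> \<le> Y"
  by (simp add: abs_mult) (metis abs_ge_zero mult_le_by_le_one)

lemma abs_mult_le_nonneg: "0 \<le> (m::real) \<Longrightarrow> 0 \<le> x \<Longrightarrow> x \<le> X \<Longrightarrow> \<bar>m * x\<bar> \<le> m * X"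
  by (simp add: abs_mult mult_left_mono)

lemma mult3_unit_interval:
  "0 \<le> x \<Longrightarrow> x \<le> 1 \<Longrightarrow> 0 \<le> y \<Longrightarrow> y \<le> 1 \<Longrightarrow> 0 \<le> z \<Longrightarrow> z \<le> 1 \<Longrightarrow>
   0 \<le> x * y * z \<and> x * y * z \<le> (1::real)"
  using mult_le_by_le_one[of x y 1] mult_le_by_le_one[of "x * y" z 1] by simp

lemma abs_mult_power_le: "0 \<le> S \<Longrightarrow> S \<le> 1 \<Longrightarrow> \<bar>x * S ^ n\<bar> \<le> \<bar>x\<bar>" for x S :: real
proof -
  assume "0 \<le> S" "S \<le> 1"
  hence "S ^ n \<le> 1" "S ^ n \<ge> 0" by (auto intro: power_le_one)
  thus ?thesis by (simp add: abs_mult mult_left_le)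
qed

lemma lipschitz_cubic_on_box:
  fixes Y z0 z1 r s Z Z1 :: real
  assumes r: "0 \<le> r" "r \<le> Y" and s: "0 \<le> s" "s \<le> Y" and Y: "Y \<le> 1"
    and Z: "\<bar>z0 + z1 * r\<bar> \<le> Z" and Z1: "\<bar>z1\<bar> \<le> Z1"
  shows "\<bar>(1 - r) * (Y - r) * (z0 + z1 * r) - (1 - s) * (Y - s) * (z0 + z1 * s)\<bar>
    \<le> (2 * Z + Z1) * \<bar>r - s\<bar>"
proof -
  have id: "(1 - r) * (Y - r) * (z0 + z1 * r) - (1 - s) * (Y - s) * (z0 + z1 * s)
     = (r - s) * (- ((Y - r) * (z0 + z1 * r)) - (1 - s) * (z0 + z1 * r) + (1 - s) * (Y - s) * z1)"
    by (simp add: algebra_simps)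
  have a1: "\<bar>(Y - r) * (z0 + z1 * r)\<bar> \<le> Z" using r Y Z by (intro abs_mult_le_by_le_one) auto
  have a2: "\<bar>(1 - s) * (z0 + z1 * r)\<bar> \<le> Z" using s Y Z by (intro abs_mult_le_by_le_one) auto
  have "\<bar>(1 - s) * (Y - s)\<bar> \<le> 1"
    using s Y by (simp add: abs_mult) (intro mult_le_by_le_one; simp)
  hence a3: "\<bar>(1 - s) * (Y - s) * z1\<bar> \<le> Z1" using Z1 by (rule abs_mult_le_by_le_one)
  have "\<bar>- ((Y - r) * (z0 + z1 * r)) - (1 - s) * (z0 + z1 * r) + (1 - s) * (Y - s) * z1\<bar> \<le> 2 * Z + Z1"
    using a1 a2 a3 by linarith
  hence "\<bar>r - s\<bar> * \<bar>- ((Y - r) * (z0 + z1 * r)) - (1 - s) * (z0 + z1 * r) + (1 - s) * (Y - s) * z1\<bar>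
      \<le> \<bar>r - s\<bar> * (2 * Z + Z1)"
    by (rule mult_left_mono) simp
  thus ?thesis unfolding id abs_mult by (simp only: mult.commute)
qed

lemma abs_diff_divide_le:
  fixes N N' D D' d1 d2 \<alpha> \<beta> Nm :: real
  assumes D: "D \<ge> d1" "d1 > 0" and D': "D' \<ge> d2" "d2 > 0"
    and a: "\<bar>N - N'\<bar> \<le> \<alpha>" and b: "\<bar>D - D'\<bar> \<le> \<beta>" and n: "\<bar>N'\<bar> \<le> Nm"
  shows "\<bar>N / D - N' / D'\<bar> \<le> \<alpha> / d1 + Nm * \<beta> / (d1 * d2)"
proof -
  have Dp: "D > 0" "D' > 0" using D D' by auto
  have a0: "\<alpha> \<ge> 0" using a abs_ge_zero[of "N - N'"] by linarith
  have b0: "\<beta> \<ge> 0" using b abs_ge_zero[of "D - D'"] by linarith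
  have n0: "Nm \<ge> 0" using n abs_ge_zero[of "N'"] by linarith
  have id: "N / D - N' / D' = (N - N') / D + N' * (D' - D) / (D * D')"
    using Dp by (simp add: field_simps)
  have "\<bar>(N - N') / D\<bar> = \<bar>N - N'\<bar> / D" using Dp by simp
  also have "\<dots> \<le> \<alpha> / D" using a Dp by (simp add: divide_right_mono)
  also have "\<dots> \<le> \<alpha> / d1" using D a0 Dp by (simp add: divide_left_mono)
  finally have t1: "\<bar>(N - N') / D\<bar> \<le> \<alpha> / d1" .
  have nb: "\<bar>N'\<bar> * \<bar>D' - D\<bar> \<le> Nm * \<beta>"
    using mult_mono[OF n _ n0 abs_ge_zero] b by (simp add: abs_minus_commute)
  have dd: "d1 * d2 \<le> D * D'" using mult_mono[OF D(1) D'(1)] D D' by simp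
  have "\<bar>N' * (D' - D) / (D * D')\<bar> = \<bar>N'\<bar> * \<bar>D' - D\<bar> / (D * D')" using Dp by (simp add: abs_mult)
  also have "\<dots> \<le> Nm * \<beta> / (D * D')" using nb Dp by (simp add: divide_right_mono)
  also have "\<dots> \<le> Nm * \<beta> / (d1 * d2)" using dd D D' n0 b0 by (intro divide_left_mono) auto
  finally have t2: "\<bar>N' * (D' - D) / (D * D')\<bar> \<le> Nm * \<beta> / (d1 * d2)" .
  show ?thesis unfolding id by (rule order_trans[OF abs_triangle_ineq add_mono[OF t1 t2]])
qed

lemma the_pos_root_quadratic:
  fixes a b c s :: real
  assumes a: "a \<ge> 0" and c: "c < 0" and s: "s > 0" and r: "a * s^2 + b * s + c = 0"
  shows "(THE s. s > 0 \<and> a * s^2 + b * s + c = 0) = s"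
proof (rule the_equality)
  show "s > 0 \<and> a * s^2 + b * s + c = 0" using s r by simp
next
  fix t assume t: "t > 0 \<and> a * t^2 + b * t + c = 0"
  show "t = s"
  proof (rule ccontr)
    assume "t \<noteq> s"
    moreover have "(t - s) * (a * (t + s) + b) = 0"
      using t r by (simp add: algebra_simps power2_eq_square)
    ultimately have b: "b = - a * (t + s)" by simp
    have "c = a * s * t" using r unfolding b by (simp add: algebra_simps power2_eq_square)
    thus False using a s t c by (smt (verit) mult_nonneg_nonneg)
  qed
qed

lemma concave_quadratic_pos_on_interval:
  fixes k a b X :: real and G :: "real \<Rightarrow> real"
  assumes G: "\<And>S. G S = k * S^2 + a * S + b" and k: "k < 0" and X: "X > 0"
    and G0: "G 0 > 0" and GX: "G X > 0" and S: "0 \<le> S" "S \<le> X"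
  shows "G S > 0"
proof -
  have id: "X * G S = (X - S) * G 0 + S * G X + (k * X) * (S * (S - X))"
    unfolding G by (simp add: algebra_simps power2_eq_square)
  have "k * X \<le> 0" using k X by (simp add: mult_neg_pos less_imp_le)
  moreover have "S * (S - X) \<le> 0" using S by (simp add: mult_nonneg_nonpos)
  ultimately have "(k * X) * (S * (S - X)) \<ge> 0" by (rule mult_nonpos_nonpos)
  moreover have "(X - S) * G 0 + S * G X > 0"
  proof (cases "S = 0")
    case False
    hence "S * G X > 0" using S GX by simp
    moreover have "(X - S) * G 0 \<ge> 0" using S G0 by simp
    ultimately show ?thesis by linarith
  qed (use X G0 in simp)
  ultimately have "X * G S > 0" using id by linarith
  thus ?thesis using X by (simp add: zero_less_mult_iff)
qed

text \<open>A cubic with negative leading coefficient that is negative at \<open>0\<close> and positive at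
  \<open>X\<close> factors as \<open>(S - r) G(S)\<close> with \<open>G\<close> a concave quadratic positive at both ends.\<close>

lemma cubic_single_sign_change:
  fixes f :: "real \<Rightarrow> real" and k0 k1 k2 k3 X :: real
  assumes f: "\<And>S. f S = k0 + k1 * S + k2 * S^2 + k3 * S^3" and k3: "k3 < 0"
    and f0: "f 0 < 0" and X: "X > 0" and fX: "f X > 0"
  shows "\<exists>r. 0 < r \<and> r < X \<and> (\<forall>S. 0 \<le> S \<and> S \<le> X \<longrightarrow>
     (S < r \<longrightarrow> f S < 0) \<and> (S = r \<longrightarrow> f S = 0) \<and> (r < S \<longrightarrow> f S > 0))"
proof -
  have "\<forall>x. 0 \<le> x \<and> x \<le> X \<longrightarrow> isCont f x"
    unfolding f[abs_def] by (intro allI impI continuous_intros)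
  then obtain r where r: "0 \<le> r" "r \<le> X" "f r = 0" using IVT[of f 0 0 X] f0 fX X by auto
  have r0: "r > 0" and rX: "r < X" using r f0 fX by (auto simp: order_le_less)
  define G where "G S = k3 * S^2 + (k3 * r + k2) * S + (k3 * r^2 + k2 * r + k1)" for S
  have fG: "f S = (S - r) * G S" for S
  proof -
    have "f S = f S - f r" using r by simp
    also have "\<dots> = (S - r) * G S"
      unfolding f G_def by (simp add: algebra_simps power2_eq_square power3_eq_cube)
    finally show ?thesis .
  qed
  have "r * G 0 > 0" using fG[of 0] f0 by simp
  hence G0: "G 0 > 0" using r0 by (rule zero_less_mult_pos)
  have "(X - r) * G X > 0" using fG[of X] fX by simp
  hence GX: "G X > 0" using rX by (simp add: zero_less_mult_iff)
  have Gpos: "G S > 0" if "0 \<le> S" "S \<le> X" for S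
    using concave_quadratic_pos_on_interval[OF G_def k3 X G0 GX that] .
  show ?thesis
  proof (intro exI conjI allI impI)
    fix S assume S: "0 \<le> S \<and> S \<le> X"
    show "S < r \<Longrightarrow> f S < 0" using fG[of S] Gpos[of S] S by (simp add: mult_neg_pos)
    show "S = r \<Longrightarrow> f S = 0" using r by simp
    show "r < S \<Longrightarrow> f S > 0" using fG[of S] Gpos[of S] S by simp
  qed (use r0 rX in auto)
qed

definition crosses_zero_at :: "(real \<Rightarrow> real) \<Rightarrow> real \<Rightarrow> bool" where
  "crosses_zero_at f r \<longleftrightarrow> 0 < r \<and>
     (\<forall>S. 0 < S \<and> S \<le> 1 \<longrightarrow> (S < r \<longrightarrow> f S < 0) \<and> (S = r \<longrightarrow> f S = 0) \<and> (r < S \<longrightarrow> f S > 0))"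

lemma strain_balance:
  fixes \<beta> \<gamma> \<sigma> \<mu> S I J R :: real
  assumes \<beta>: "\<beta> > 0" and \<sigma>: "\<sigma> > 0" and \<gamma>\<mu>: "\<gamma> + \<mu> > 0" and I: "I > 0"
    and J: "J \<ge> 0" and S: "S \<ge> 0"
    and infection: "\<beta> * S * (I + J) - (\<mu> + \<gamma>) * I = 0"
    and reinfection: "\<beta> * \<sigma> * R * (I + J) - (\<mu> + \<gamma>) * J = 0"
  shows "0 < S \<and> \<beta> * (I + J) * S = (\<gamma> + \<mu>) * I \<and> \<sigma> * R = (\<gamma> + \<mu>) / \<beta> - S \<and>
    J * S = I * ((\<gamma> + \<mu>) / \<beta> - S)"
proof -
  have L: "I + J > 0" using I J by simp
  have inf: "\<beta> * (I + J) * S = (\<gamma> + \<mu>) * I" using infection by (simp add: algebra_simps)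
  hence "S \<noteq> 0" using \<gamma>\<mu> I by auto
  hence S0: "S > 0" using S by simp
  have "\<beta> * (I + J) * (S + \<sigma> * R) = (\<gamma> + \<mu>) * (I + J)"
    using infection reinfection by (simp add: algebra_simps)
  hence "\<beta> * (S + \<sigma> * R) = \<gamma> + \<mu>" using L by simp
  hence R: "\<sigma> * R = (\<gamma> + \<mu>) / \<beta> - S" using \<beta> by (simp add: field_simps)
  have "(\<gamma> + \<mu>) * (J * S) = ((\<mu> + \<gamma>) * J) * S" by (simp add: algebra_simps)
  also have "\<dots> = (\<beta> * \<sigma> * R * (I + J)) * S" using reinfection by simp
  also have "\<dots> = (\<beta> * (I + J) * S) * (\<sigma> * R)" by (simp add: algebra_simps)
  also have "\<dots> = (\<gamma> + \<mu>) * (I * ((\<gamma> + \<mu>) / \<beta> - S))" using inf R by simp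
  finally have "J * S = I * ((\<gamma> + \<mu>) / \<beta> - S)" using \<gamma>\<mu> by simp
  thus ?thesis using S0 inf R by blast
qed

lemma Omega_i_inverse_iff:
  fixes a b \<gamma> \<mu> \<sigma> :: real
  assumes a: "a > 0" and b: "b > 0" and \<gamma>: "\<gamma> > 0" and \<mu>: "\<mu> > 0" and \<sigma>: "0 < \<sigma>" "\<sigma> \<le> 1"
  shows "Omega_i \<mu> \<gamma> \<sigma> (1 / a) (1 / b) \<longleftrightarrow> a < 1 \<and> (1 - a) * \<gamma> * \<sigma> - (\<gamma> + \<mu>) * (b - a) > 0"
proof (cases "a < 1")
  case True
  define D where "D = (1 + \<sigma> * (1 / a - 1)) * \<gamma> + \<mu>"
  have "1 / a - 1 > 0" using True a by (simp add: field_simps)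
  hence D0: "D > 0" unfolding D_def using \<sigma> \<gamma> \<mu> by (smt (verit) mult_pos_pos)
  have aD: "a * D = a * \<gamma> + \<sigma> * (1 - a) * \<gamma> + a * \<mu>" using a by (simp add: D_def field_simps)
  have "1 / b > (\<gamma> + \<mu>) * (1 / a) / D \<longleftrightarrow> (\<gamma> + \<mu>) * b < a * D"
    using a b D0 by (simp add: field_simps)
  also have "\<dots> \<longleftrightarrow> (1 - a) * \<gamma> * \<sigma> - (\<gamma> + \<mu>) * (b - a) > 0"
    unfolding aD by (simp add: algebra_simps)
  finally show ?thesis using True a unfolding Omega_i_def D_def by (simp add: field_simps)
qed (use a in \<open>simp add: Omega_i_def field_simps\<close>)

section \<open>Reduction of the steady-state equations to one cubic\<close>

locale two_strain =
  fixes \<beta>1 \<beta>2 \<gamma>1 \<gamma>2 \<sigma>12 \<sigma>21 :: real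
  assumes \<beta>1: "\<beta>1 > 0" and \<beta>2: "\<beta>2 > 0" and \<gamma>1: "\<gamma>1 > 0" and \<gamma>2: "\<gamma>2 > 0"
    and \<sigma>21_pos: "0 < \<sigma>21" and \<sigma>21_le_\<sigma>12: "\<sigma>21 \<le> \<sigma>12" and \<sigma>12_le_1: "\<sigma>12 \<le> 1"
begin

lemma \<sigma>12_pos: "\<sigma>12 > 0" using \<sigma>21_pos \<sigma>21_le_\<sigma>12 by linarith
lemma \<sigma>21_le_1: "\<sigma>21 \<le> 1" using \<sigma>21_le_\<sigma>12 \<sigma>12_le_1 by linarith

definition endemic :: "real \<Rightarrow> state \<Rightarrow> bool" where
  "endemic \<mu> x \<longleftrightarrow> steady_state \<beta>1 \<beta>2 \<gamma>1 \<gamma>2 \<sigma>12 \<sigma>21 \<mu> x \<and> feasible x \<and> I1_of x > 0 \<and> I2_of x > 0"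

definition A :: "real \<Rightarrow> real" where "A \<mu> = (\<gamma>1 + \<mu>) / \<beta>1"
definition B :: "real \<Rightarrow> real" where "B \<mu> = (\<gamma>2 + \<mu>) / \<beta>2"

lemma A_pos: "\<mu> \<ge> 0 \<Longrightarrow> A \<mu> > 0" using \<beta>1 \<gamma>1 by (simp add: A_def)
lemma B_pos: "\<mu> \<ge> 0 \<Longrightarrow> B \<mu> > 0" using \<beta>2 \<gamma>2 by (simp add: B_def)

lemma repr_num_eq: "\<mu> \<ge> 0 \<Longrightarrow> repr_num \<beta>1 \<gamma>1 \<mu> = 1 / A \<mu> \<and> repr_num \<beta>2 \<gamma>2 \<mu> = 1 / B \<mu>"
  by (simp add: repr_num_def A_def B_def)

text \<open>With \<open>R\<^sub>1, R\<^sub>2, J\<^sub>1, J\<^sub>2\<close> eliminated by lemma strain_balance, a steady state is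
  described by the following three equations in \<open>(S, I\<^sub>1, I\<^sub>2)\<close>: the two recovered-class
  equations multiplied by \<open>S\<close>, and the total-population balance.\<close>

definition reduced_eqs :: "real \<Rightarrow> real \<Rightarrow> real \<Rightarrow> real \<Rightarrow> bool" where
  "reduced_eqs \<mu> S I1 I2 \<longleftrightarrow>
     \<gamma>1 * S * I1 = (\<gamma>2 + \<mu>) * (B \<mu> - S) * I2 + \<mu> * (B \<mu> - S) * S / \<sigma>12 \<and>
     \<gamma>2 * S * I2 = (\<gamma>1 + \<mu>) * (A \<mu> - S) * I1 + \<mu> * (A \<mu> - S) * S / \<sigma>21 \<and>
     \<mu> * (1 - S) = (\<gamma>1 + \<mu>) * I1 + (\<gamma>2 + \<mu>) * I2"

definition completion :: "real \<Rightarrow> real \<Rightarrow> real \<Rightarrow> real \<Rightarrow> state" where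
  "completion \<mu> S I1 I2 =
     (let J1 = I1 * (A \<mu> - S) / S; J2 = I2 * (B \<mu> - S) / S
      in (S, I1, I2, J1, J2, (B \<mu> - S) / \<sigma>12, (A \<mu> - S) / \<sigma>21, (\<gamma>1 * J1 + \<gamma>2 * J2) / \<mu>))"

lemma steady_state_imp_reduced_eqs:
  assumes \<mu>: "\<mu> > 0"
    and ss: "steady_state \<beta>1 \<beta>2 \<gamma>1 \<gamma>2 \<sigma>12 \<sigma>21 \<mu> (S, I1, I2, J1, J2, R1, R2, R3)"
    and fe: "feasible (S, I1, I2, J1, J2, R1, R2, R3)"
    and I1: "I1 > 0" and I2: "I2 > 0"
  shows "0 < S \<and> reduced_eqs \<mu> S I1 I2 \<and> (S, I1, I2, J1, J2, R1, R2, R3) = completion \<mu> S I1 I2"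
proof -
  from ss have e1: "\<mu> - \<beta>1 * (I1 + J1) * S - \<beta>2 * (I2 + J2) * S - \<mu> * S = 0"
    and e2: "\<beta>1 * S * (I1 + J1) - (\<mu> + \<gamma>1) * I1 = 0"
    and e3: "\<beta>2 * S * (I2 + J2) - (\<mu> + \<gamma>2) * I2 = 0"
    and e4: "\<beta>1 * \<sigma>21 * R2 * (I1 + J1) - (\<mu> + \<gamma>1) * J1 = 0"
    and e5: "\<beta>2 * \<sigma>12 * R1 * (I2 + J2) - (\<mu> + \<gamma>2) * J2 = 0"
    and e6: "\<gamma>1 * I1 = \<beta>2 * \<sigma>12 * (I2 + J2) * R1 + \<mu> * R1"
    and e7: "\<gamma>2 * I2 = \<beta>1 * \<sigma>21 * (I1 + J1) * R2 + \<mu> * R2"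
    and e8: "\<gamma>1 * J1 + \<gamma>2 * J2 - \<mu> * R3 = 0"
    unfolding steady_state_def by auto
  from fe have nn: "S \<ge> 0" "J1 \<ge> 0" "J2 \<ge> 0" unfolding feasible_def by auto
  have s1: "0 < S" "\<beta>1 * (I1 + J1) * S = (\<gamma>1 + \<mu>) * I1" "\<sigma>21 * R2 = A \<mu> - S"
    "J1 * S = I1 * (A \<mu> - S)"
    using strain_balance[OF \<beta>1 \<sigma>21_pos _ I1 nn(2,1) e2 e4] \<mu> \<gamma>1 unfolding A_def by auto
  have s2: "\<beta>2 * (I2 + J2) * S = (\<gamma>2 + \<mu>) * I2" "\<sigma>12 * R1 = B \<mu> - S"
    "J2 * S = I2 * (B \<mu> - S)"
    using strain_balance[OF \<beta>2 \<sigma>12_pos _ I2 nn(3,1) e3 e5] \<mu> \<gamma>2 unfolding B_def by auto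
  have R: "R1 = (B \<mu> - S) / \<sigma>12" "R2 = (A \<mu> - S) / \<sigma>21"
    using s1(3) s2(2) \<sigma>12_pos \<sigma>21_pos by (auto simp: field_simps)
  have "\<gamma>1 * S * I1 = S * (\<beta>2 * \<sigma>12 * (I2 + J2) * R1 + \<mu> * R1)" using e6 by simp
  also have "\<dots> = (\<beta>2 * (I2 + J2) * S) * (\<sigma>12 * R1) + \<mu> * S * R1" by (simp add: algebra_simps)
  finally have E1: "\<gamma>1 * S * I1 = (\<gamma>2 + \<mu>) * (B \<mu> - S) * I2 + \<mu> * (B \<mu> - S) * S / \<sigma>12"
    using s2 R by simp
  have "\<gamma>2 * S * I2 = S * (\<beta>1 * \<sigma>21 * (I1 + J1) * R2 + \<mu> * R2)" using e7 by simp
  also have "\<dots> = (\<beta>1 * (I1 + J1) * S) * (\<sigma>21 * R2) + \<mu> * S * R2" by (simp add: algebra_simps)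
  finally have E2: "\<gamma>2 * S * I2 = (\<gamma>1 + \<mu>) * (A \<mu> - S) * I1 + \<mu> * (A \<mu> - S) * S / \<sigma>21"
    using s1 R by simp
  have E3: "\<mu> * (1 - S) = (\<gamma>1 + \<mu>) * I1 + (\<gamma>2 + \<mu>) * I2"
    using e1 s1(2) s2(1) by (simp add: algebra_simps)
  have "R3 = (\<gamma>1 * J1 + \<gamma>2 * J2) / \<mu>" using e8 \<mu> by (simp add: field_simps)
  moreover have "J1 = I1 * (A \<mu> - S) / S" "J2 = I2 * (B \<mu> - S) / S"
    using s1 s2 by (auto simp: field_simps)
  ultimately show ?thesis
    using s1(1) E1 E2 E3 R by (simp add: reduced_eqs_def completion_def Let_def)
qed

text \<open>Cramer's rule on the first two reduced equations gives \<open>\<Delta> I\<^sub>i = \<mu> S X\<^sub>i\<close>; the third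
  one then becomes \<open>F \<mu> S = 0\<close>.\<close>

definition X1 :: "real \<Rightarrow> real \<Rightarrow> real" where
  "X1 \<mu> S = (B \<mu> - S) * (\<gamma>2 * S / \<sigma>12 + (\<gamma>2 + \<mu>) * (A \<mu> - S) / \<sigma>21)"
definition X2 :: "real \<Rightarrow> real \<Rightarrow> real" where
  "X2 \<mu> S = (A \<mu> - S) * (\<gamma>1 * S / \<sigma>21 + (\<gamma>1 + \<mu>) * (B \<mu> - S) / \<sigma>12)"
definition Q :: "real \<Rightarrow> real \<Rightarrow> real" where
  "Q \<mu> S = (\<gamma>1 + \<mu>) * X1 \<mu> S + (\<gamma>2 + \<mu>) * X2 \<mu> S"
definition \<Delta> :: "real \<Rightarrow> real \<Rightarrow> real" where
  "\<Delta> \<mu> S = \<gamma>1 * \<gamma>2 * S^2 - (\<gamma>1 + \<mu>) * (\<gamma>2 + \<mu>) * (A \<mu> - S) * (B \<mu> - S)"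
definition F :: "real \<Rightarrow> real \<Rightarrow> real" where
  "F \<mu> S = (1 - S) * \<Delta> \<mu> S - S * Q \<mu> S"

definition I1_at :: "real \<Rightarrow> real \<Rightarrow> real" where "I1_at \<mu> S = \<mu> * (1 - S) * X1 \<mu> S / Q \<mu> S"
definition I2_at :: "real \<Rightarrow> real \<Rightarrow> real" where "I2_at \<mu> S = \<mu> * (1 - S) * X2 \<mu> S / Q \<mu> S"

definition equilibrium :: "real \<Rightarrow> real \<Rightarrow> state" where
  "equilibrium \<mu> S = completion \<mu> S (I1_at \<mu> S) (I2_at \<mu> S)"

lemma equilibrium_components [simp]:
  "S_of (equilibrium \<mu> S) = S" "I1_of (equilibrium \<mu> S) = I1_at \<mu> S"
  "I2_of (equilibrium \<mu> S) = I2_at \<mu> S"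
  by (simp_all add: equilibrium_def completion_def Let_def S_of_def I1_of_def I2_of_def)

lemma X_Q_pos:
  assumes "0 \<le> \<mu>" "0 \<le> S" "S < A \<mu>" "S < B \<mu>"
  shows "X1 \<mu> S > 0" "X2 \<mu> S > 0" "Q \<mu> S > 0"
proof -
  have "\<gamma>2 * S / \<sigma>12 + (\<gamma>2 + \<mu>) * (A \<mu> - S) / \<sigma>21 > 0"
    "\<gamma>1 * S / \<sigma>21 + (\<gamma>1 + \<mu>) * (B \<mu> - S) / \<sigma>12 > 0"
    using assms \<gamma>1 \<gamma>2 \<sigma>12_pos \<sigma>21_pos by (intro add_nonneg_pos; simp)+
  thus X1: "X1 \<mu> S > 0" and X2: "X2 \<mu> S > 0" using assms by (simp_all add: X1_def X2_def)
  have "\<gamma>1 + \<mu> > 0" "\<gamma>2 + \<mu> > 0" using \<gamma>1 \<gamma>2 assms(1) by auto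
  thus "Q \<mu> S > 0" unfolding Q_def using X1 X2 by (metis add_pos_pos mult_pos_pos)
qed

lemma reduced_eqs_elim:
  assumes red: "reduced_eqs \<mu> S I1 I2"
  shows "\<Delta> \<mu> S * I1 = \<mu> * S * X1 \<mu> S" "\<Delta> \<mu> S * I2 = \<mu> * S * X2 \<mu> S"
    "\<mu> * (1 - S) * \<Delta> \<mu> S = \<mu> * S * Q \<mu> S"
proof -
  define u v where "u = A \<mu> - S" and "v = B \<mu> - S"
  have E1: "\<gamma>1 * S * I1 = (\<gamma>2 + \<mu>) * v * I2 + \<mu> * v * S / \<sigma>12"
    and E2: "\<gamma>2 * S * I2 = (\<gamma>1 + \<mu>) * u * I1 + \<mu> * u * S / \<sigma>21"
    and E3: "\<mu> * (1 - S) = (\<gamma>1 + \<mu>) * I1 + (\<gamma>2 + \<mu>) * I2"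
    using red by (auto simp: reduced_eqs_def u_def v_def)
  have \<Delta>: "\<Delta> \<mu> S = \<gamma>1 * \<gamma>2 * S^2 - (\<gamma>1 + \<mu>) * (\<gamma>2 + \<mu>) * u * v" by (simp add: \<Delta>_def u_def v_def)
  have "\<Delta> \<mu> S * I1 = \<gamma>2 * S * (\<gamma>1 * S * I1) - (\<gamma>2 + \<mu>) * v * ((\<gamma>1 + \<mu>) * u * I1)"
    unfolding \<Delta> by (simp add: power2_eq_square algebra_simps)
  also have "\<dots> = \<gamma>2 * S * ((\<gamma>2 + \<mu>) * v * I2 + \<mu> * v * S / \<sigma>12)
      - (\<gamma>2 + \<mu>) * v * (\<gamma>2 * S * I2 - \<mu> * u * S / \<sigma>21)"
    using E1 E2 by simp
  also have "\<dots> = \<mu> * S * X1 \<mu> S"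
    using \<sigma>12_pos \<sigma>21_pos by (simp add: X1_def u_def v_def field_simps; algebra?)
  finally show DI1: "\<Delta> \<mu> S * I1 = \<mu> * S * X1 \<mu> S" .
  have "\<Delta> \<mu> S * I2 = \<gamma>1 * S * (\<gamma>2 * S * I2) - (\<gamma>1 + \<mu>) * u * ((\<gamma>2 + \<mu>) * v * I2)"
    unfolding \<Delta> by (simp add: power2_eq_square algebra_simps)
  also have "\<dots> = \<gamma>1 * S * ((\<gamma>1 + \<mu>) * u * I1 + \<mu> * u * S / \<sigma>21)
      - (\<gamma>1 + \<mu>) * u * (\<gamma>1 * S * I1 - \<mu> * v * S / \<sigma>12)"
    using E1 E2 by simp
  also have "\<dots> = \<mu> * S * X2 \<mu> S"
    using \<sigma>12_pos \<sigma>21_pos by (simp add: X2_def u_def v_def field_simps; algebra?)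
  finally show DI2: "\<Delta> \<mu> S * I2 = \<mu> * S * X2 \<mu> S" .
  have "\<mu> * (1 - S) * \<Delta> \<mu> S = (\<gamma>1 + \<mu>) * (\<Delta> \<mu> S * I1) + (\<gamma>2 + \<mu>) * (\<Delta> \<mu> S * I2)"
    unfolding E3 by (simp add: algebra_simps)
  thus "\<mu> * (1 - S) * \<Delta> \<mu> S = \<mu> * S * Q \<mu> S" unfolding DI1 DI2 by (simp add: Q_def algebra_simps)
qed

lemma reduced_eqs_bounds:
  assumes \<mu>: "\<mu> > 0" and S: "S > 0" and I1: "I1 > 0" and I2: "I2 > 0"
    and red: "reduced_eqs \<mu> S I1 I2"
  shows "S < A \<mu>" "S < B \<mu>" "S < 1"
proof -
  have E1: "\<gamma>1 * S * I1 = (B \<mu> - S) * ((\<gamma>2 + \<mu>) * I2 + \<mu> * S / \<sigma>12)"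
    and E2: "\<gamma>2 * S * I2 = (A \<mu> - S) * ((\<gamma>1 + \<mu>) * I1 + \<mu> * S / \<sigma>21)"
    and E3: "\<mu> * (1 - S) = (\<gamma>1 + \<mu>) * I1 + (\<gamma>2 + \<mu>) * I2"
    using red \<sigma>12_pos \<sigma>21_pos by (auto simp: reduced_eqs_def field_simps)
  have "\<gamma>1 * S * I1 > 0" "\<gamma>2 * S * I2 > 0" using \<gamma>1 \<gamma>2 S I1 I2 by simp_all
  moreover have "(\<gamma>2 + \<mu>) * I2 + \<mu> * S / \<sigma>12 > 0" "(\<gamma>1 + \<mu>) * I1 + \<mu> * S / \<sigma>21 > 0"
    using \<gamma>1 \<gamma>2 \<mu> S I1 I2 \<sigma>12_pos \<sigma>21_pos by (auto intro!: add_pos_pos)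
  ultimately show "S < B \<mu>" "S < A \<mu>" unfolding E1 E2 by (simp_all add: zero_less_mult_iff)
  have "\<mu> * (1 - S) > 0" unfolding E3 using \<gamma>1 \<gamma>2 \<mu> I1 I2 by (intro add_pos_pos mult_pos_pos) auto
  thus "S < 1" using \<mu> by (simp add: zero_less_mult_iff)
qed

lemma reduced_eqs_imp_F_root:
  assumes \<mu>: "\<mu> > 0" and S: "S > 0" and I1: "I1 > 0" and I2: "I2 > 0"
    and red: "reduced_eqs \<mu> S I1 I2"
  shows "S < A \<mu> \<and> S < B \<mu> \<and> S < 1 \<and> F \<mu> S = 0 \<and> I1 = I1_at \<mu> S \<and> I2 = I2_at \<mu> S"
proof -
  note bounds = reduced_eqs_bounds[OF assms]
  note elim = reduced_eqs_elim[OF red]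
  have Q: "Q \<mu> S > 0" using X_Q_pos \<mu> S bounds by simp
  have FD: "(1 - S) * \<Delta> \<mu> S = S * Q \<mu> S" using elim(3) \<mu> by (simp add: mult.assoc)
  have solve: "I = \<mu> * (1 - S) * X / Q \<mu> S" if DI: "\<Delta> \<mu> S * I = \<mu> * S * X" for I X
  proof -
    have "S * (Q \<mu> S * I) = ((1 - S) * \<Delta> \<mu> S) * I" unfolding FD by (simp add: mult.assoc)
    also have "\<dots> = S * (\<mu> * (1 - S) * X)" using DI by (simp add: algebra_simps)
    finally have "Q \<mu> S * I = \<mu> * (1 - S) * X" using S by simp
    thus ?thesis using Q by (simp add: field_simps)
  qed
  have "I1 = I1_at \<mu> S" "I2 = I2_at \<mu> S"
    using solve[OF elim(1)] solve[OF elim(2)] by (simp_all add: I1_at_def I2_at_def)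
  thus ?thesis using bounds FD by (simp add: F_def)
qed

lemma X1_X2_cramer:
  "\<gamma>1 * S * X1 \<mu> S - (\<gamma>2 + \<mu>) * (B \<mu> - S) * X2 \<mu> S = (B \<mu> - S) * \<Delta> \<mu> S / \<sigma>12"
  "\<gamma>2 * S * X2 \<mu> S - (\<gamma>1 + \<mu>) * (A \<mu> - S) * X1 \<mu> S = (A \<mu> - S) * \<Delta> \<mu> S / \<sigma>21"
  using \<sigma>12_pos \<sigma>21_pos
  by ((simp add: X1_def X2_def \<Delta>_def field_simps power2_eq_square; algebra?))+

lemma F_root_imp_reduced_eqs:
  assumes \<mu>: "\<mu> > 0" and S: "0 < S" "S < A \<mu>" "S < B \<mu>" "S < 1" and F: "F \<mu> S = 0"
  shows "reduced_eqs \<mu> S (I1_at \<mu> S) (I2_at \<mu> S) \<and> I1_at \<mu> S > 0 \<and> I2_at \<mu> S > 0"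
proof -
  note pos = X_Q_pos[of \<mu> S]
  have Q: "Q \<mu> S > 0" using pos \<mu> S by simp
  have FD: "(1 - S) * \<Delta> \<mu> S = S * Q \<mu> S" using F by (simp add: F_def)
  have "(\<gamma>1 + \<mu>) * I1_at \<mu> S + (\<gamma>2 + \<mu>) * I2_at \<mu> S = \<mu> * (1 - S) * Q \<mu> S / Q \<mu> S"
    by (simp add: I1_at_def I2_at_def Q_def add_divide_distrib[symmetric] algebra_simps)
  hence E3: "\<mu> * (1 - S) = (\<gamma>1 + \<mu>) * I1_at \<mu> S + (\<gamma>2 + \<mu>) * I2_at \<mu> S" using Q by simp
  have "\<gamma>1 * S * I1_at \<mu> S - (\<gamma>2 + \<mu>) * (B \<mu> - S) * I2_at \<mu> S
      = \<mu> * (1 - S) * (\<gamma>1 * S * X1 \<mu> S - (\<gamma>2 + \<mu>) * (B \<mu> - S) * X2 \<mu> S) / Q \<mu> S"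
    using Q by (simp add: I1_at_def I2_at_def field_simps; algebra?)
  also have "\<dots> = \<mu> * ((1 - S) * \<Delta> \<mu> S) * (B \<mu> - S) / \<sigma>12 / Q \<mu> S"
    unfolding X1_X2_cramer by (simp add: algebra_simps)
  also have "\<dots> = \<mu> * (B \<mu> - S) * S / \<sigma>12" unfolding FD
    using Q \<sigma>12_pos \<sigma>21_pos by (simp add: field_simps)
  finally have E1: "\<gamma>1 * S * I1_at \<mu> S = (\<gamma>2 + \<mu>) * (B \<mu> - S) * I2_at \<mu> S + \<mu> * (B \<mu> - S) * S / \<sigma>12"
    by simp
  have "\<gamma>2 * S * I2_at \<mu> S - (\<gamma>1 + \<mu>) * (A \<mu> - S) * I1_at \<mu> S
      = \<mu> * (1 - S) * (\<gamma>2 * S * X2 \<mu> S - (\<gamma>1 + \<mu>) * (A \<mu> - S) * X1 \<mu> S) / Q \<mu> S"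
    using Q by (simp add: I1_at_def I2_at_def field_simps; algebra?)
  also have "\<dots> = \<mu> * ((1 - S) * \<Delta> \<mu> S) * (A \<mu> - S) / \<sigma>21 / Q \<mu> S"
    unfolding X1_X2_cramer by (simp add: algebra_simps)
  also have "\<dots> = \<mu> * (A \<mu> - S) * S / \<sigma>21" unfolding FD
    using Q \<sigma>12_pos \<sigma>21_pos by (simp add: field_simps)
  finally have E2: "\<gamma>2 * S * I2_at \<mu> S = (\<gamma>1 + \<mu>) * (A \<mu> - S) * I1_at \<mu> S + \<mu> * (A \<mu> - S) * S / \<sigma>21"
    by simp
  have "I1_at \<mu> S > 0" "I2_at \<mu> S > 0" using pos \<mu> S Q by (simp_all add: I1_at_def I2_at_def)
  thus ?thesis using E1 E2 E3 by (simp add: reduced_eqs_def)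
qed

lemma steady_state_rhs_sum:
  fixes S I1 I2 J1 J2 R1 R2 R3 :: real
  shows "(\<mu> - \<beta>1 * (I1 + J1) * S - \<beta>2 * (I2 + J2) * S - \<mu> * S) +
     (\<beta>1 * S * (I1 + J1) - (\<mu> + \<gamma>1) * I1) + (\<beta>2 * S * (I2 + J2) - (\<mu> + \<gamma>2) * I2) +
     (\<beta>1 * \<sigma>21 * R2 * (I1 + J1) - (\<mu> + \<gamma>1) * J1) + (\<beta>2 * \<sigma>12 * R1 * (I2 + J2) - (\<mu> + \<gamma>2) * J2) +
     (\<gamma>1 * I1 - \<beta>2 * \<sigma>12 * (I2 + J2) * R1 - \<mu> * R1) + (\<gamma>2 * I2 - \<beta>1 * \<sigma>21 * (I1 + J1) * R2 - \<mu> * R2) +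
     (\<gamma>1 * J1 + \<gamma>2 * J2 - \<mu> * R3) = \<mu> * (1 - (S + I1 + I2 + J1 + J2 + R1 + R2 + R3))"
  by (simp add: algebra_simps)

lemma reduced_eqs_imp_endemic:
  assumes \<mu>: "\<mu> > 0" and S: "0 < S" "S < A \<mu>" "S < B \<mu>" and I1: "I1 > 0" and I2: "I2 > 0"
    and red: "reduced_eqs \<mu> S I1 I2"
  shows "endemic \<mu> (completion \<mu> S I1 I2)"
proof -
  define J1 J2 R1 R2 R3 where "J1 = I1 * (A \<mu> - S) / S" and "J2 = I2 * (B \<mu> - S) / S"
    and "R1 = (B \<mu> - S) / \<sigma>12" and "R2 = (A \<mu> - S) / \<sigma>21" and "R3 = (\<gamma>1 * J1 + \<gamma>2 * J2) / \<mu>"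
  have x: "completion \<mu> S I1 I2 = (S, I1, I2, J1, J2, R1, R2, R3)"
    by (simp add: completion_def Let_def J1_def J2_def R1_def R2_def R3_def)
  have pos: "J1 > 0" "J2 > 0" "R1 > 0" "R2 > 0"
    using S I1 I2 \<sigma>12_pos \<sigma>21_pos by (simp_all add: J1_def J2_def R1_def R2_def)
  hence "R3 > 0" using \<gamma>1 \<gamma>2 \<mu> by (simp add: R3_def add_pos_pos)
  have L1: "\<beta>1 * (I1 + J1) = (\<gamma>1 + \<mu>) * I1 / S" and L2: "\<beta>2 * (I2 + J2) = (\<gamma>2 + \<mu>) * I2 / S"
    using S \<beta>1 \<beta>2 by (simp_all add: J1_def J2_def A_def B_def field_simps)
  have E1: "\<gamma>1 * S * I1 = (\<gamma>2 + \<mu>) * (B \<mu> - S) * I2 + \<mu> * (B \<mu> - S) * S / \<sigma>12"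
    and E2: "\<gamma>2 * S * I2 = (\<gamma>1 + \<mu>) * (A \<mu> - S) * I1 + \<mu> * (A \<mu> - S) * S / \<sigma>21"
    and E3: "\<mu> * (1 - S) = (\<gamma>1 + \<mu>) * I1 + (\<gamma>2 + \<mu>) * I2"
    using red by (auto simp: reduced_eqs_def)
  have e1: "\<mu> - \<beta>1 * (I1 + J1) * S - \<beta>2 * (I2 + J2) * S - \<mu> * S = 0"
    using L1 L2 E3 S by (simp add: field_simps)
  have e23: "\<beta>1 * S * (I1 + J1) - (\<mu> + \<gamma>1) * I1 = 0" "\<beta>2 * S * (I2 + J2) - (\<mu> + \<gamma>2) * I2 = 0"
    using L1 L2 S by (simp_all add: field_simps)
  have "\<beta>1 * \<sigma>21 * R2 * (I1 + J1) = (A \<mu> - S) * (\<beta>1 * (I1 + J1))"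
    "\<beta>2 * \<sigma>12 * R1 * (I2 + J2) = (B \<mu> - S) * (\<beta>2 * (I2 + J2))"
    using \<sigma>12_pos \<sigma>21_pos by (simp_all add: R1_def R2_def)
  hence e45: "\<beta>1 * \<sigma>21 * R2 * (I1 + J1) - (\<mu> + \<gamma>1) * J1 = 0"
    "\<beta>2 * \<sigma>12 * R1 * (I2 + J2) - (\<mu> + \<gamma>2) * J2 = 0"
    unfolding L1 L2 using S by (simp_all add: J1_def J2_def field_simps)
  have "\<gamma>1 * I1 - \<beta>2 * \<sigma>12 * (I2 + J2) * R1 - \<mu> * R1
      = \<gamma>1 * I1 - (B \<mu> - S) * (\<beta>2 * (I2 + J2)) - \<mu> * (B \<mu> - S) / \<sigma>12"
    using \<sigma>12_pos by (simp add: R1_def)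
  also have "\<dots> = (\<gamma>1 * S * I1 - (\<gamma>2 + \<mu>) * (B \<mu> - S) * I2 - \<mu> * (B \<mu> - S) * S / \<sigma>12) / S"
    unfolding L2 using S by (simp add: field_simps)
  finally have e6: "\<gamma>1 * I1 - \<beta>2 * \<sigma>12 * (I2 + J2) * R1 - \<mu> * R1 = 0" using E1 by simp
  have "\<gamma>2 * I2 - \<beta>1 * \<sigma>21 * (I1 + J1) * R2 - \<mu> * R2
      = \<gamma>2 * I2 - (A \<mu> - S) * (\<beta>1 * (I1 + J1)) - \<mu> * (A \<mu> - S) / \<sigma>21"
    using \<sigma>21_pos by (simp add: R2_def)
  also have "\<dots> = (\<gamma>2 * S * I2 - (\<gamma>1 + \<mu>) * (A \<mu> - S) * I1 - \<mu> * (A \<mu> - S) * S / \<sigma>21) / S"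
    unfolding L1 using S by (simp add: field_simps)
  finally have e7: "\<gamma>2 * I2 - \<beta>1 * \<sigma>21 * (I1 + J1) * R2 - \<mu> * R2 = 0" using E2 by simp
  have e8: "\<gamma>1 * J1 + \<gamma>2 * J2 - \<mu> * R3 = 0" using \<mu> by (simp add: R3_def)
  have "\<mu> * (1 - (S + I1 + I2 + J1 + J2 + R1 + R2 + R3)) = 0"
    unfolding steady_state_rhs_sum[symmetric] using e1 e23 e45 e6 e7 e8 by simp
  hence "S + I1 + I2 + J1 + J2 + R1 + R2 + R3 = 1" using \<mu> by simp
  thus ?thesis
    using e1 e23 e45 e6 e7 e8 S I1 I2 pos \<open>R3 > 0\<close>
    unfolding x endemic_def steady_state_def feasible_def I1_of_def I2_of_def by simp
qed

lemma endemic_iff: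
  assumes \<mu>: "\<mu> > 0"
  shows "endemic \<mu> x \<longleftrightarrow> (\<exists>S. 0 < S \<and> S < A \<mu> \<and> S < B \<mu> \<and> S < 1 \<and> F \<mu> S = 0 \<and> x = equilibrium \<mu> S)"
proof
  assume "endemic \<mu> x"
  moreover obtain S I1 I2 J1 J2 R1 R2 R3 where x: "x = (S, I1, I2, J1, J2, R1, R2, R3)"
    by (cases x) auto
  ultimately have ss: "steady_state \<beta>1 \<beta>2 \<gamma>1 \<gamma>2 \<sigma>12 \<sigma>21 \<mu> (S, I1, I2, J1, J2, R1, R2, R3)"
    "feasible (S, I1, I2, J1, J2, R1, R2, R3)" "I1 > 0" "I2 > 0"
    by (auto simp: endemic_def I1_of_def I2_of_def)
  note red = steady_state_imp_reduced_eqs[OF \<mu> ss]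
  note root = reduced_eqs_imp_F_root[OF \<mu> _ ss(3,4)] red
  show "\<exists>S. 0 < S \<and> S < A \<mu> \<and> S < B \<mu> \<and> S < 1 \<and> F \<mu> S = 0 \<and> x = equilibrium \<mu> S"
    using red root by (intro exI[of _ S]) (auto simp: x equilibrium_def)
next
  assume "\<exists>S. 0 < S \<and> S < A \<mu> \<and> S < B \<mu> \<and> S < 1 \<and> F \<mu> S = 0 \<and> x = equilibrium \<mu> S"
  then obtain S where S: "0 < S" "S < A \<mu>" "S < B \<mu>" "S < 1" "F \<mu> S = 0" and x: "x = equilibrium \<mu> S"
    by blast
  note red = F_root_imp_reduced_eqs[OF \<mu> S]
  show "endemic \<mu> x" unfolding x equilibrium_def
    using reduced_eqs_imp_endemic[OF \<mu> S(1-3)] red by blast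
qed

section \<open>The region \<open>\<Omega>\<^sup>\<mu>\<close> in terms of \<open>F\<close>\<close>

lemma F_at_A: "F \<mu> (A \<mu>) = \<gamma>2 * (A \<mu>)^2 * ((1 - A \<mu>) * \<gamma>1 - (\<gamma>1 + \<mu>) * (B \<mu> - A \<mu>) / \<sigma>12)"
  using \<sigma>12_pos \<sigma>21_pos
  by (simp add: F_def \<Delta>_def Q_def X1_def X2_def field_simps power2_eq_square; algebra?)

lemma F_at_B: "F \<mu> (B \<mu>) = \<gamma>1 * (B \<mu>)^2 * ((1 - B \<mu>) * \<gamma>2 - (\<gamma>2 + \<mu>) * (A \<mu> - B \<mu>) / \<sigma>21)"
  using \<sigma>12_pos \<sigma>21_pos
  by (simp add: F_def \<Delta>_def Q_def X1_def X2_def field_simps power2_eq_square; algebra?)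

lemma F_at_0_neg: "\<mu> \<ge> 0 \<Longrightarrow> F \<mu> 0 < 0"
  using A_pos[of \<mu>] B_pos[of \<mu>] \<gamma>1 \<gamma>2 by (simp add: F_def \<Delta>_def)

lemma F_A_pos_iff:
  assumes "\<mu> \<ge> 0"
  shows "F \<mu> (A \<mu>) > 0 \<longleftrightarrow> (1 - A \<mu>) * \<gamma>1 * \<sigma>12 - (\<gamma>1 + \<mu>) * (B \<mu> - A \<mu>) > 0"
proof -
  have "F \<mu> (A \<mu>) = \<gamma>2 * (A \<mu>)^2 / \<sigma>12 * ((1 - A \<mu>) * \<gamma>1 * \<sigma>12 - (\<gamma>1 + \<mu>) * (B \<mu> - A \<mu>))"
    using \<sigma>12_pos by (simp add: F_at_A field_simps)
  moreover have "\<gamma>2 * (A \<mu>)^2 / \<sigma>12 > 0" using A_pos[OF assms] \<gamma>2 \<sigma>12_pos by simp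
  ultimately show ?thesis by (metis zero_less_mult_pos mult_pos_pos)
qed

lemma F_B_pos_iff:
  assumes "\<mu> \<ge> 0"
  shows "F \<mu> (B \<mu>) > 0 \<longleftrightarrow> (1 - B \<mu>) * \<gamma>2 * \<sigma>21 - (\<gamma>2 + \<mu>) * (A \<mu> - B \<mu>) > 0"
proof -
  have "F \<mu> (B \<mu>) = \<gamma>1 * (B \<mu>)^2 / \<sigma>21 * ((1 - B \<mu>) * \<gamma>2 * \<sigma>21 - (\<gamma>2 + \<mu>) * (A \<mu> - B \<mu>))"
    using \<sigma>21_pos by (simp add: F_at_B field_simps)
  moreover have "\<gamma>1 * (B \<mu>)^2 / \<sigma>21 > 0" using B_pos[OF assms] \<gamma>1 \<sigma>21_pos by simp
  ultimately show ?thesis by (metis zero_less_mult_pos mult_pos_pos)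
qed

lemma Omega_iff_F_pos:
  assumes \<mu>: "\<mu> > 0"
  shows "Omega \<mu> \<gamma>1 \<gamma>2 \<sigma>12 \<sigma>21 (1 / A \<mu>) (1 / B \<mu>) \<longleftrightarrow>
    A \<mu> < 1 \<and> B \<mu> < 1 \<and> F \<mu> (A \<mu>) > 0 \<and> F \<mu> (B \<mu>) > 0"
  using Omega_i_inverse_iff[OF A_pos B_pos \<gamma>1 \<mu> \<sigma>12_pos \<sigma>12_le_1]
    Omega_i_inverse_iff[OF B_pos A_pos \<gamma>2 \<mu> \<sigma>21_pos \<sigma>21_le_1]
    F_A_pos_iff[of \<mu>] F_B_pos_iff[of \<mu>] \<mu>
  unfolding Omega_def by auto

section \<open>\<open>F \<mu>\<close> changes sign exactly once on \<open>(0, 1]\<close> for small \<open>\<mu>\<close>\<close>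

definition P2 :: "real \<Rightarrow> real" where
  "P2 \<mu> = \<sigma>12 * (1 - \<sigma>21) * B \<mu> + \<sigma>21 * (1 - \<sigma>12) * A \<mu>"
definition P1 :: "real \<Rightarrow> real" where
  "P1 \<mu> = \<sigma>12 * \<sigma>21 * (A \<mu> + B \<mu>) - (\<sigma>12 + \<sigma>21 - \<sigma>12 * \<sigma>21) * A \<mu> * B \<mu>"
definition P0 :: "real \<Rightarrow> real" where "P0 \<mu> = - \<sigma>12 * \<sigma>21 * A \<mu> * B \<mu>"

definition F_main :: "real \<Rightarrow> real \<Rightarrow> real" where
  "F_main \<mu> S = \<gamma>1 * \<gamma>2 / (\<sigma>12 * \<sigma>21) * (P2 \<mu> * S^2 + P1 \<mu> * S + P0 \<mu>)"
definition F_rem :: "real \<Rightarrow> real \<Rightarrow> real" where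
  "F_rem \<mu> S = - (S^2) * (B \<mu> - S) * \<gamma>2 / \<sigma>12 - S^2 * (A \<mu> - S) * \<gamma>1 / \<sigma>21
     - (A \<mu> - S) * (B \<mu> - S) * ((1 - S) + S * (1 / \<sigma>12 + 1 / \<sigma>21)) * (\<gamma>1 + \<gamma>2 + \<mu>)"

lemma F_split: "F \<mu> S = F_main \<mu> S + \<mu> * F_rem \<mu> S"
proof -
  have "(1 - S) * (\<gamma>1 * \<gamma>2 * S^2 - (\<gamma>1 + \<mu>) * (\<gamma>2 + \<mu>) * (a - S) * (b - S))
    - S * ((\<gamma>1 + \<mu>) * ((b - S) * (\<gamma>2 * S / \<sigma>12 + (\<gamma>2 + \<mu>) * (a - S) / \<sigma>21))
      + (\<gamma>2 + \<mu>) * ((a - S) * (\<gamma>1 * S / \<sigma>21 + (\<gamma>1 + \<mu>) * (b - S) / \<sigma>12)))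
    = \<gamma>1 * \<gamma>2 / (\<sigma>12 * \<sigma>21) * ((\<sigma>12 * (1 - \<sigma>21) * b + \<sigma>21 * (1 - \<sigma>12) * a) * S^2
      + (\<sigma>12 * \<sigma>21 * (a + b) - (\<sigma>12 + \<sigma>21 - \<sigma>12 * \<sigma>21) * a * b) * S - \<sigma>12 * \<sigma>21 * a * b)
    + \<mu> * (- (S^2) * (b - S) * \<gamma>2 / \<sigma>12 - S^2 * (a - S) * \<gamma>1 / \<sigma>21
      - (a - S) * (b - S) * ((1 - S) + S * (1 / \<sigma>12 + 1 / \<sigma>21)) * (\<gamma>1 + \<gamma>2 + \<mu>))" for a b
    using \<sigma>12_pos \<sigma>21_pos by (simp add: field_simps) algebra
  from this[of "A \<mu>" "B \<mu>"] show ?thesis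
    by (simp add: F_def \<Delta>_def Q_def X1_def X2_def F_main_def P2_def P1_def P0_def F_rem_def)
qed

definition rem_c0 :: "real \<Rightarrow> real" where "rem_c0 \<mu> = - (\<gamma>1 + \<gamma>2 + \<mu>) * A \<mu> * B \<mu>"
definition rem_c1 :: "real \<Rightarrow> real" where
  "rem_c1 \<mu> = - (\<gamma>1 + \<gamma>2 + \<mu>) * (A \<mu> * B \<mu> * (1 / \<sigma>12 + 1 / \<sigma>21 - 1) - (A \<mu> + B \<mu>))"
definition rem_c2 :: "real \<Rightarrow> real" where
  "rem_c2 \<mu> = - \<gamma>2 / \<sigma>12 * B \<mu> - \<gamma>1 / \<sigma>21 * A \<mu>
     - (\<gamma>1 + \<gamma>2 + \<mu>) * (1 - (A \<mu> + B \<mu>) * (1 / \<sigma>12 + 1 / \<sigma>21 - 1))"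
definition rem_c3 :: "real \<Rightarrow> real" where
  "rem_c3 \<mu> = \<gamma>2 / \<sigma>12 + \<gamma>1 / \<sigma>21 - (\<gamma>1 + \<gamma>2 + \<mu>) * (1 / \<sigma>12 + 1 / \<sigma>21 - 1)"

lemma F_rem_cubic: "F_rem \<mu> S = rem_c0 \<mu> + rem_c1 \<mu> * S + rem_c2 \<mu> * S^2 + rem_c3 \<mu> * S^3"
  using \<sigma>12_pos \<sigma>21_pos
  by (simp add: F_rem_def rem_c0_def rem_c1_def rem_c2_def rem_c3_def field_simps
      power2_eq_square power3_eq_cube; algebra?)

definition F_c0 :: "real \<Rightarrow> real" where "F_c0 \<mu> = \<gamma>1 * \<gamma>2 / (\<sigma>12 * \<sigma>21) * P0 \<mu> + \<mu> * rem_c0 \<mu>"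
definition F_c1 :: "real \<Rightarrow> real" where "F_c1 \<mu> = \<gamma>1 * \<gamma>2 / (\<sigma>12 * \<sigma>21) * P1 \<mu> + \<mu> * rem_c1 \<mu>"
definition F_c2 :: "real \<Rightarrow> real" where "F_c2 \<mu> = \<gamma>1 * \<gamma>2 / (\<sigma>12 * \<sigma>21) * P2 \<mu> + \<mu> * rem_c2 \<mu>"
definition F_c3 :: "real \<Rightarrow> real" where "F_c3 \<mu> = \<mu> * rem_c3 \<mu>"

lemma F_cubic: "F \<mu> S = F_c0 \<mu> + F_c1 \<mu> * S + F_c2 \<mu> * S^2 + F_c3 \<mu> * S^3"
  unfolding F_split F_rem_cubic F_main_def F_c0_def F_c1_def F_c2_def F_c3_def
  by (simp add: algebra_simps)

lemma F_c3_neg: assumes "\<mu> > 0" shows "F_c3 \<mu> < 0"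
proof -
  have ip: "1 / \<sigma>12 \<ge> 1" and iq: "1 / \<sigma>21 \<ge> 1"
    using \<sigma>12_pos \<sigma>12_le_1 \<sigma>21_pos \<sigma>21_le_1 by simp_all
  have "rem_c3 \<mu> = \<gamma>1 * (1 - 1 / \<sigma>12) + \<gamma>2 * (1 - 1 / \<sigma>21) - \<mu> * (1 / \<sigma>12 + 1 / \<sigma>21 - 1)"
    unfolding rem_c3_def using \<sigma>12_pos \<sigma>21_pos by (simp add: field_simps)
  moreover have "\<gamma>1 * (1 - 1 / \<sigma>12) \<le> 0" "\<gamma>2 * (1 - 1 / \<sigma>21) \<le> 0"
    using \<gamma>1 \<gamma>2 ip iq by (simp_all add: mult_nonneg_nonpos)
  moreover have "\<mu> * (1 / \<sigma>12 + 1 / \<sigma>21 - 1) \<ge> \<mu> * 1" using assms ip iq by (intro mult_left_mono) auto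
  ultimately have "rem_c3 \<mu> < 0" using assms by linarith
  thus ?thesis using assms by (simp add: F_c3_def mult_pos_neg)
qed

lemma F_coeffs_tendsto:
  "(F_c0 \<longlongrightarrow> F_c0 0) (at_right 0)" "(F_c1 \<longlongrightarrow> F_c1 0) (at_right 0)"
  "(F_c2 \<longlongrightarrow> F_c2 0) (at_right 0)" "(F_c3 \<longlongrightarrow> F_c3 0) (at_right 0)"
proof -
  have "isCont F_c0 0" "isCont F_c1 0" "isCont F_c2 0" "isCont F_c3 0"
    unfolding F_c0_def[abs_def] F_c1_def[abs_def] F_c2_def[abs_def] F_c3_def[abs_def]
      P0_def P1_def P2_def rem_c0_def rem_c1_def rem_c2_def rem_c3_def A_def B_def
    using \<beta>1 \<beta>2 \<sigma>12_pos \<sigma>21_pos by (auto intro!: continuous_intros)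
  thus "(F_c0 \<longlongrightarrow> F_c0 0) (at_right 0)" "(F_c1 \<longlongrightarrow> F_c1 0) (at_right 0)"
    "(F_c2 \<longlongrightarrow> F_c2 0) (at_right 0)" "(F_c3 \<longlongrightarrow> F_c3 0) (at_right 0)"
    using isCont_tendsto_compose[OF _ tendsto_ident_at] by blast+
qed

lemma F_0_neg_on_unit_interval:
  assumes "\<not> F 0 2 > 0"
  obtains \<delta> where "\<delta> > 0" "\<And>S. 0 \<le> S \<Longrightarrow> S \<le> 1 \<Longrightarrow> F 0 S \<le> - \<delta>"
proof -
  define K where "K = \<gamma>1 * \<gamma>2 / (\<sigma>12 * \<sigma>21)"
  have K0: "K > 0" unfolding K_def using \<gamma>1 \<gamma>2 \<sigma>12_pos \<sigma>21_pos by simp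
  have P20: "P2 0 \<ge> 0"
    unfolding P2_def using \<sigma>12_pos \<sigma>21_pos \<sigma>12_le_1 \<sigma>21_le_1 A_pos[of 0] B_pos[of 0] by simp
  have F0: "F 0 S = K * (P2 0 * S^2 + P1 0 * S + P0 0)" for S
    using F_split[of 0 S] by (simp add: F_main_def K_def)
  have f00: "F 0 0 < 0" using F_at_0_neg by simp
  have "F 0 0 + F 0 2 - 2 * F 0 1 = 2 * K * P2 0" unfolding F0 by (simp add: algebra_simps)
  hence f01: "F 0 1 < 0" using assms f00 K0 P20 by (smt (verit) mult_nonneg_nonneg)
  show ?thesis
  proof
    show "min (- F 0 0) (- F 0 1) > 0" using f00 f01 by simp
    fix S :: real assume S: "0 \<le> S" "S \<le> 1"
    have "(1 - S) * F 0 0 + S * F 0 1 - F 0 S = K * P2 0 * (S * (1 - S))"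
      unfolding F0 by (simp add: algebra_simps power2_eq_square)
    moreover have "K * P2 0 * (S * (1 - S)) \<ge> 0" using K0 P20 S by simp
    moreover have "(1 - S) * F 0 0 \<le> (1 - S) * - min (- F 0 0) (- F 0 1)"
      "S * F 0 1 \<le> S * - min (- F 0 0) (- F 0 1)"
      using S by (intro mult_left_mono; simp)+
    ultimately show "F 0 S \<le> - min (- F 0 0) (- F 0 1)" by (simp add: algebra_simps)
  qed
qed

lemma eventually_F_close_to_F_0:
  assumes "\<delta> > 0"
  shows "eventually (\<lambda>\<mu>. \<forall>S. 0 \<le> S \<and> S \<le> 1 \<longrightarrow> \<bar>F \<mu> S - F 0 S\<bar> < \<delta>) (at_right 0)"
proof -
  define d where "d \<mu> = \<bar>F_c0 \<mu> - F_c0 0\<bar> + \<bar>F_c1 \<mu> - F_c1 0\<bar> + \<bar>F_c2 \<mu> - F_c2 0\<bar>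
    + \<bar>F_c3 \<mu> - F_c3 0\<bar>" for \<mu>
  have "(d \<longlongrightarrow> 0) (at_right 0)"
    using tendsto_intros(17)[OF tendsto_diff[OF F_coeffs_tendsto(1) tendsto_const]]
    unfolding d_def[abs_def] by (auto intro!: tendsto_eq_intros F_coeffs_tendsto)
  hence ev: "eventually (\<lambda>\<mu>. d \<mu> < \<delta>) (at_right 0)" using order_tendstoD(2) assms by blast
  have bound: "\<bar>F \<mu> S - F 0 S\<bar> \<le> d \<mu>" if "0 \<le> S" "S \<le> 1" for \<mu> S
  proof -
    have "F \<mu> S - F 0 S = (F_c0 \<mu> - F_c0 0) * S^0 + (F_c1 \<mu> - F_c1 0) * S^1
        + (F_c2 \<mu> - F_c2 0) * S^2 + (F_c3 \<mu> - F_c3 0) * S^3"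
      unfolding F_cubic by (simp add: algebra_simps)
    thus ?thesis unfolding d_def
      using abs_mult_power_le[OF that, of "F_c0 \<mu> - F_c0 0" 0] abs_mult_power_le[OF that, of "F_c1 \<mu> - F_c1 0" 1]
        abs_mult_power_le[OF that, of "F_c2 \<mu> - F_c2 0" 2] abs_mult_power_le[OF that, of "F_c3 \<mu> - F_c3 0" 3]
      by linarith
  qed
  show ?thesis using ev
  proof (rule eventually_mono)
    fix \<mu> assume "d \<mu> < \<delta>"
    thus "\<forall>S. 0 \<le> S \<and> S \<le> 1 \<longrightarrow> \<bar>F \<mu> S - F 0 S\<bar> < \<delta>" using bound[of _ \<mu>] by fastforce
  qed
qed

lemma eventually_F_crosses_zero:
  "eventually (\<lambda>\<mu>. \<exists>r. crosses_zero_at (F \<mu>) r) (at_right 0)"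
proof (cases "F 0 2 > 0")
  case True
  have "((\<lambda>\<mu>. F \<mu> 2) \<longlongrightarrow> F 0 2) (at_right 0)"
    unfolding F_cubic using F_coeffs_tendsto by (intro tendsto_intros)
  hence "eventually (\<lambda>\<mu>. F \<mu> 2 > 0) (at_right 0)" using True order_tendstoD(1) by blast
  moreover have "eventually (\<lambda>\<mu>. \<mu> > 0) (at_right (0::real))" by (rule eventually_at_right_less)
  ultimately show ?thesis
  proof eventually_elim
    case (elim \<mu>)
    then obtain r where r0: "0 < r" "r < 2" and r: "\<forall>S. 0 \<le> S \<and> S \<le> 2 \<longrightarrow>
       (S < r \<longrightarrow> F \<mu> S < 0) \<and> (S = r \<longrightarrow> F \<mu> S = 0) \<and> (r < S \<longrightarrow> F \<mu> S > 0)"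
      using cubic_single_sign_change[OF F_cubic F_c3_neg _ _ _, of \<mu> 2] F_at_0_neg[of \<mu>] by auto
    have "crosses_zero_at (F \<mu>) r" unfolding crosses_zero_at_def
    proof (intro conjI allI impI r0(1))
      fix S :: real assume "0 < S \<and> S \<le> 1"
      hence "0 \<le> S \<and> S \<le> 2" by simp
      thus "S < r \<Longrightarrow> F \<mu> S < 0" "S = r \<Longrightarrow> F \<mu> S = 0" "r < S \<Longrightarrow> F \<mu> S > 0"
        using r by blast+
    qed
    thus ?case by blast
  qed
next
  case False
  then obtain \<delta> where \<delta>: "\<delta> > 0" "\<And>S. 0 \<le> S \<Longrightarrow> S \<le> 1 \<Longrightarrow> F 0 S \<le> - \<delta>"
    using F_0_neg_on_unit_interval[OF False] by blast
  show ?thesis using eventually_F_close_to_F_0[OF \<delta>(1)]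
  proof eventually_elim
    case (elim \<mu>)
    have "F \<mu> S < 0" if "0 < S" "S \<le> 1" for S
      using elim[rule_format, of S] \<delta>(2)[of S] that by (simp add: abs_less_iff)
    hence "crosses_zero_at (F \<mu>) 2" unfolding crosses_zero_at_def by auto
    thus ?case by blast
  qed
qed

lemma F_1_nonpos:
  assumes "0 \<le> \<mu>" "1 \<le> A \<mu>" "1 \<le> B \<mu>"
  shows "F \<mu> 1 \<le> 0"
proof -
  have "X1 \<mu> 1 \<ge> 0" "X2 \<mu> 1 \<ge> 0"
    unfolding X1_def X2_def using assms \<gamma>1 \<gamma>2 \<sigma>12_pos \<sigma>21_pos by simp_all
  hence "Q \<mu> 1 \<ge> 0"
    unfolding Q_def using assms(1) \<gamma>1 \<gamma>2 by (intro add_nonneg_nonneg mult_nonneg_nonneg) auto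
  thus ?thesis by (simp add: F_def)
qed

lemma A_lt_1_if_crosses:
  assumes \<mu>: "\<mu> > 0" and r: "crosses_zero_at (F \<mu>) r" "r < 1" "r < B \<mu>"
  shows "A \<mu> < 1"
proof (rule ccontr)
  assume "\<not> A \<mu> < 1"
  hence A: "1 \<le> A \<mu>" by simp
  have F1: "F \<mu> 1 > 0" using r unfolding crosses_zero_at_def by auto
  show False
  proof (cases "1 \<le> B \<mu>")
    case True
    thus False using F_1_nonpos[OF _ A True] \<mu> F1 by simp
  next
    case False
    have "F \<mu> (B \<mu>) > 0" using r False B_pos[of \<mu>] \<mu> unfolding crosses_zero_at_def by auto
    hence pos: "(1 - B \<mu>) * \<gamma>2 * \<sigma>21 - (\<gamma>2 + \<mu>) * (A \<mu> - B \<mu>) > 0" using F_B_pos_iff \<mu> by simp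
    have "(1 - B \<mu>) * \<gamma>2 * \<sigma>21 \<le> (1 - B \<mu>) * \<gamma>2"
      using False \<gamma>2 \<sigma>21_le_1 by (simp add: mult_left_le)
    also have "\<dots> \<le> (A \<mu> - B \<mu>) * (\<gamma>2 + \<mu>)" using A False \<gamma>2 \<mu> by (intro mult_mono) auto
    finally show False using pos by (simp add: algebra_simps)
  qed
qed

lemma B_lt_1_if_crosses:
  assumes \<mu>: "\<mu> > 0" and r: "crosses_zero_at (F \<mu>) r" "r < 1" "r < A \<mu>"
  shows "B \<mu> < 1"
proof (rule ccontr)
  assume "\<not> B \<mu> < 1"
  hence B: "1 \<le> B \<mu>" by simp
  have F1: "F \<mu> 1 > 0" using r unfolding crosses_zero_at_def by auto
  show False
  proof (cases "1 \<le> A \<mu>")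
    case True
    thus False using F_1_nonpos[OF _ True B] \<mu> F1 by simp
  next
    case False
    have "F \<mu> (A \<mu>) > 0" using r False A_pos[of \<mu>] \<mu> unfolding crosses_zero_at_def by auto
    hence pos: "(1 - A \<mu>) * \<gamma>1 * \<sigma>12 - (\<gamma>1 + \<mu>) * (B \<mu> - A \<mu>) > 0" using F_A_pos_iff \<mu> by simp
    have "(1 - A \<mu>) * \<gamma>1 * \<sigma>12 \<le> (1 - A \<mu>) * \<gamma>1"
      using False \<gamma>1 \<sigma>12_le_1 by (simp add: mult_left_le)
    also have "\<dots> \<le> (B \<mu> - A \<mu>) * (\<gamma>1 + \<mu>)" using B False \<gamma>1 \<mu> by (intro mult_mono) auto
    finally show False using pos by (simp add: algebra_simps)
  qed
qed

lemma Omega_iff_crosses_below: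
  assumes \<mu>: "\<mu> > 0" and r: "crosses_zero_at (F \<mu>) r"
  shows "Omega \<mu> \<gamma>1 \<gamma>2 \<sigma>12 \<sigma>21 (1 / A \<mu>) (1 / B \<mu>) \<longleftrightarrow> r < A \<mu> \<and> r < B \<mu> \<and> r < 1"
proof -
  have AB: "A \<mu> > 0" "B \<mu> > 0" using A_pos B_pos \<mu> by auto
  have "F \<mu> S > 0 \<longleftrightarrow> r < S" if "0 < S" "S < 1" for S
    using r that unfolding crosses_zero_at_def
      by (metis less_asym less_imp_le linorder_neqE_linordered_idom)
  thus ?thesis
    using Omega_iff_F_pos[OF \<mu>] A_lt_1_if_crosses[OF \<mu> r] B_lt_1_if_crosses[OF \<mu> r] AB
    by (smt (verit))
qed

lemma endemic_iff_crossing: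
  assumes \<mu>: "\<mu> > 0" and r: "crosses_zero_at (F \<mu>) r"
  shows "endemic \<mu> x \<longleftrightarrow> r < A \<mu> \<and> r < B \<mu> \<and> r < 1 \<and> x = equilibrium \<mu> r"
proof -
  have "F \<mu> S = 0 \<longleftrightarrow> S = r" if "0 < S" "S < 1" for S
    using r that unfolding crosses_zero_at_def
      by (metis less_imp_le linorder_neqE_linordered_idom order.irrefl)
  moreover have "0 < r" using r by (simp add: crosses_zero_at_def)
  ultimately show ?thesis unfolding endemic_iff[OF \<mu>] by auto
qed

section \<open>The limiting quadratic and its root \<open>s\<^sub>0\<close>\<close>

lemma F_main_alt:
  "F_main \<mu> S = \<gamma>1 * \<gamma>2 * ((1 - S) * (S^2 - (A \<mu> - S) * (B \<mu> - S))
    - S * (A \<mu> * (B \<mu> - S) / \<sigma>12 + B \<mu> * (A \<mu> - S) / \<sigma>21))"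
  using \<sigma>12_pos \<sigma>21_pos
    by (simp add: F_main_def P2_def P1_def P0_def field_simps power2_eq_square; algebra?)

lemma F_main_root:
  assumes "F_main \<mu> s = 0" shows "s * (P2 \<mu> * s + P1 \<mu>) = \<sigma>12 * \<sigma>21 * A \<mu> * B \<mu>"
proof -
  have "\<gamma>1 * \<gamma>2 / (\<sigma>12 * \<sigma>21) \<noteq> 0" using \<gamma>1 \<gamma>2 \<sigma>12_pos \<sigma>21_pos by simp
  hence "P2 \<mu> * s^2 + P1 \<mu> * s + P0 \<mu> = 0" using assms unfolding F_main_def by simp
  thus ?thesis unfolding P0_def by (simp add: algebra_simps power2_eq_square)
qed

lemma F_main_ps:
  assumes "\<mu> \<ge> 0"
  shows "F_main \<mu> S = \<gamma>1 * \<gamma>2 / (\<sigma>12 * \<sigma>21) * (A \<mu> * B \<mu>) *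
    (ps_a \<sigma>12 \<sigma>21 (1 / A \<mu>) (1 / B \<mu>) * S^2 + ps_b \<sigma>12 \<sigma>21 (1 / A \<mu>) (1 / B \<mu>) * S + ps_c \<sigma>12 \<sigma>21)"
proof -
  have a: "A \<mu> > 0" and b: "B \<mu> > 0" using A_pos B_pos assms by auto
  show ?thesis unfolding F_main_def P2_def P1_def P0_def ps_a_def ps_b_def ps_c_def
    using a b \<sigma>12_pos \<sigma>21_pos by (simp add: field_simps; algebra?)
qed

lemma ps_a_nonneg: "\<mu> \<ge> 0 \<Longrightarrow> ps_a \<sigma>12 \<sigma>21 (1 / A \<mu>) (1 / B \<mu>) \<ge> 0"
  unfolding ps_a_def using A_pos[of \<mu>] B_pos[of \<mu>] \<sigma>12_pos \<sigma>21_pos \<sigma>12_le_1 \<sigma>21_le_1 by simp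

lemma s0_eq:
  assumes \<mu>: "\<mu> \<ge> 0" and s: "s > 0" and Fs: "F_main \<mu> s = 0"
  shows "s0 \<sigma>12 \<sigma>21 (1 / A \<mu>) (1 / B \<mu>) = s"
proof -
  have a: "A \<mu> > 0" and b: "B \<mu> > 0" using A_pos B_pos \<mu> by auto
  have K: "\<gamma>1 * \<gamma>2 / (\<sigma>12 * \<sigma>21) * (A \<mu> * B \<mu>) \<noteq> 0" using a b \<gamma>1 \<gamma>2 \<sigma>12_pos \<sigma>21_pos by simp
  have r: "ps_a \<sigma>12 \<sigma>21 (1 / A \<mu>) (1 / B \<mu>) * s^2 + ps_b \<sigma>12 \<sigma>21 (1 / A \<mu>) (1 / B \<mu>) * s + ps_c \<sigma>12 \<sigma>21 = 0"
    using Fs F_main_ps[OF \<mu>, of s] K by simp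
  have c: "ps_c \<sigma>12 \<sigma>21 < 0" unfolding ps_c_def using \<sigma>12_pos \<sigma>21_pos by simp
  show ?thesis unfolding s0_def using the_pos_root_quadratic[OF ps_a_nonneg[OF \<mu>] c s r] .
qed

lemma F_main_at_A: "F_main \<mu> (A \<mu>) = \<gamma>1 * \<gamma>2 * (A \<mu>)^2 * ((1 - A \<mu>) - (B \<mu> - A \<mu>) / \<sigma>12)"
  unfolding F_main_alt by (simp add: algebra_simps power2_eq_square)

lemma F_main_at_B: "F_main \<mu> (B \<mu>) = \<gamma>1 * \<gamma>2 * (B \<mu>)^2 * ((1 - B \<mu>) - (A \<mu> - B \<mu>) / \<sigma>21)"
  unfolding F_main_alt by (simp add: algebra_simps power2_eq_square)

lemma F_main_pos_imp_gt_root: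
  assumes s: "s > 0" and Fs: "F_main \<mu> s = 0" and S: "S \<ge> 0" and AB: "A \<mu> > 0" "B \<mu> > 0"
    and FS: "F_main \<mu> S > 0"
  shows "s < S"
proof -
  define K where "K = \<gamma>1 * \<gamma>2 / (\<sigma>12 * \<sigma>21)"
  have K0: "K > 0" unfolding K_def using \<gamma>1 \<gamma>2 \<sigma>12_pos \<sigma>21_pos by simp
  have F_main_eq: "F_main \<mu> x = K * (P2 \<mu> * x^2 + P1 \<mu> * x + P0 \<mu>)" for x by (simp add: F_main_def K_def)
  have id: "F_main \<mu> S - F_main \<mu> s = K * (S - s) * (P2 \<mu> * (S + s) + P1 \<mu>)" unfolding F_main_eq
    by (simp add: algebra_simps power2_eq_square)
  have P2: "P2 \<mu> \<ge> 0" unfolding P2_def using AB \<sigma>12_pos \<sigma>21_pos \<sigma>12_le_1 \<sigma>21_le_1 by simp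
  have "P2 \<mu> * s + P1 \<mu> = \<sigma>12 * \<sigma>21 * A \<mu> * B \<mu> / s"
    using F_main_root[OF Fs] s by (simp add: field_simps)
  moreover have "\<sigma>12 * \<sigma>21 * A \<mu> * B \<mu> / s > 0" using \<sigma>12_pos \<sigma>21_pos AB s by simp
  moreover have "P2 \<mu> * S \<ge> 0" using P2 S by simp
  ultimately have T: "P2 \<mu> * (S + s) + P1 \<mu> > 0" by (simp add: algebra_simps)
  have "K * (S - s) * (P2 \<mu> * (S + s) + P1 \<mu>) > 0" using id FS Fs by simp
  hence "(S - s) * (K * (P2 \<mu> * (S + s) + P1 \<mu>)) > 0" by (simp add: algebra_simps)
  moreover have "K * (P2 \<mu> * (S + s) + P1 \<mu>) > 0" using K0 T by simp
  ultimately have "S - s > 0" by (simp add: zero_less_mult_iff)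
  thus ?thesis by simp
qed

lemma F_main_at_A_pos:
  assumes \<mu>: "\<mu> \<ge> 0" and A1: "A \<mu> < 1" and FA: "F \<mu> (A \<mu>) > 0"
  shows "F_main \<mu> (A \<mu>) > 0"
proof -
  have h: "(1 - A \<mu>) * \<gamma>1 * \<sigma>12 - (\<gamma>1 + \<mu>) * (B \<mu> - A \<mu>) > 0" using F_A_pos_iff \<mu> FA by simp
  have "(1 - A \<mu>) * \<sigma>12 - (B \<mu> - A \<mu>) > 0"
  proof (cases "B \<mu> \<le> A \<mu>")
    case True thus ?thesis using A1 \<sigma>12_pos by (smt (verit) mult_pos_pos)
  next
    case False
    hence "\<gamma>1 * (B \<mu> - A \<mu>) \<le> (\<gamma>1 + \<mu>) * (B \<mu> - A \<mu>)" using \<mu> by (intro mult_right_mono) auto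
    hence "\<gamma>1 * ((1 - A \<mu>) * \<sigma>12 - (B \<mu> - A \<mu>)) > 0" using h by (simp add: algebra_simps)
    thus ?thesis using \<gamma>1 by (simp add: zero_less_mult_iff)
  qed
  hence "(1 - A \<mu>) - (B \<mu> - A \<mu>) / \<sigma>12 > 0" using \<sigma>12_pos by (simp add: field_simps)
  thus ?thesis unfolding F_main_at_A using \<gamma>1 \<gamma>2 A_pos[OF \<mu>] by simp
qed

lemma F_main_at_B_pos:
  assumes \<mu>: "\<mu> \<ge> 0" and B1: "B \<mu> < 1" and FB: "F \<mu> (B \<mu>) > 0"
  shows "F_main \<mu> (B \<mu>) > 0"
proof -
  have h: "(1 - B \<mu>) * \<gamma>2 * \<sigma>21 - (\<gamma>2 + \<mu>) * (A \<mu> - B \<mu>) > 0" using F_B_pos_iff \<mu> FB by simp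
  have "(1 - B \<mu>) * \<sigma>21 - (A \<mu> - B \<mu>) > 0"
  proof (cases "A \<mu> \<le> B \<mu>")
    case True thus ?thesis using B1 \<sigma>21_pos by (smt (verit) mult_pos_pos)
  next
    case False
    hence "\<gamma>2 * (A \<mu> - B \<mu>) \<le> (\<gamma>2 + \<mu>) * (A \<mu> - B \<mu>)" using \<mu> by (intro mult_right_mono) auto
    hence "\<gamma>2 * ((1 - B \<mu>) * \<sigma>21 - (A \<mu> - B \<mu>)) > 0" using h by (simp add: algebra_simps)
    thus ?thesis using \<gamma>2 by (simp add: zero_less_mult_iff)
  qed
  hence "(1 - B \<mu>) - (A \<mu> - B \<mu>) / \<sigma>21 > 0" using \<sigma>21_pos by (simp add: field_simps)
  thus ?thesis unfolding F_main_at_B using \<gamma>1 \<gamma>2 B_pos[OF \<mu>] by simp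
qed

lemma s0_props:
  assumes \<mu>: "\<mu> \<ge> 0" and A1: "A \<mu> < 1" and B1: "B \<mu> < 1"
    and FA: "F \<mu> (A \<mu>) > 0" and FB: "F \<mu> (B \<mu>) > 0"
  shows "0 < s0 \<sigma>12 \<sigma>21 (1 / A \<mu>) (1 / B \<mu>) \<and> s0 \<sigma>12 \<sigma>21 (1 / A \<mu>) (1 / B \<mu>) < A \<mu> \<and>
    s0 \<sigma>12 \<sigma>21 (1 / A \<mu>) (1 / B \<mu>) < B \<mu> \<and> F_main \<mu> (s0 \<sigma>12 \<sigma>21 (1 / A \<mu>) (1 / B \<mu>)) = 0"
proof -
  have a: "A \<mu> > 0" and b: "B \<mu> > 0" using A_pos B_pos \<mu> by auto
  have main_A_pos: "F_main \<mu> (A \<mu>) > 0" and main_B_pos: "F_main \<mu> (B \<mu>) > 0"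
    using F_main_at_A_pos[OF \<mu> A1 FA] F_main_at_B_pos[OF \<mu> B1 FB] .
  have main_0_neg: "F_main \<mu> 0 < 0"
    unfolding F_main_def P0_def using \<gamma>1 \<gamma>2 \<sigma>12_pos \<sigma>21_pos a b by (simp add: mult_pos_neg)
  have "\<forall>x. 0 \<le> x \<and> x \<le> A \<mu> \<longrightarrow> isCont (F_main \<mu>) x"
    unfolding F_main_def[abs_def] by (intro allI impI continuous_intros)
  then obtain s where s: "0 \<le> s" "s \<le> A \<mu>" "F_main \<mu> s = 0"
    using IVT[of "F_main \<mu>" 0 0 "A \<mu>"] main_0_neg main_A_pos a by auto
  have s0: "s > 0" using s main_0_neg by (metis order_le_less less_irrefl)
  have "s < A \<mu>" "s < B \<mu>"
    using F_main_pos_imp_gt_root[OF s0 s(3) _ a b] main_A_pos main_B_pos a b by simp_all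
  thus ?thesis using s0_eq[OF \<mu> s0 s(3)] s0 s by simp
qed

definition Q_main :: "real \<Rightarrow> real \<Rightarrow> real" where
  "Q_main \<mu> S = \<gamma>1 * \<gamma>2 * (A \<mu> * (B \<mu> - S) / \<sigma>12 + B \<mu> * (A \<mu> - S) / \<sigma>21)"
definition Q_rem :: "real \<Rightarrow> real \<Rightarrow> real" where
  "Q_rem \<mu> S = (B \<mu> - S) * \<gamma>2 * S / \<sigma>12 + (A \<mu> - S) * \<gamma>1 * S / \<sigma>21
    + (\<gamma>1 + \<gamma>2 + \<mu>) * (A \<mu> - S) * (B \<mu> - S) * (1/\<sigma>12 + 1/\<sigma>21)"
definition N1_main :: "real \<Rightarrow> real \<Rightarrow> real" where
  "N1_main \<mu> S = (1 - S) * (B \<mu> - S) * (\<gamma>2 * (S / \<sigma>12 + (A \<mu> - S) / \<sigma>21))"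
definition N2_main :: "real \<Rightarrow> real \<Rightarrow> real" where
  "N2_main \<mu> S = (1 - S) * (A \<mu> - S) * (\<gamma>1 * (S / \<sigma>21 + (B \<mu> - S) / \<sigma>12))"

lemma Q_split: "Q \<mu> S = Q_main \<mu> S + \<mu> * Q_rem \<mu> S"
  using \<sigma>12_pos \<sigma>21_pos by (simp add: Q_def X1_def X2_def Q_main_def Q_rem_def field_simps; algebra?)

lemma N1_split: "(1 - S) * X1 \<mu> S = N1_main \<mu> S + \<mu> * ((1 - S) * (B \<mu> - S) * (A \<mu> - S) / \<sigma>21)"
  using \<sigma>12_pos \<sigma>21_pos by (simp add: X1_def N1_main_def field_simps; algebra?)

lemma N2_split: "(1 - S) * X2 \<mu> S = N2_main \<mu> S + \<mu> * ((1 - S) * (A \<mu> - S) * (B \<mu> - S) / \<sigma>12)"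
  using \<sigma>12_pos \<sigma>21_pos by (simp add: X2_def N2_main_def field_simps; algebra?)

text \<open>At a root \<open>s\<close> of \<open>F_main\<close>, these identities turn \<open>N1_main s / Q_main s\<close> and
  \<open>N2_main s / Q_main s\<close> into the coefficients \<open>b\<^sub>1, b\<^sub>2\<close> of \<open>I\<^sub>i = \<mu> b\<^sub>i + O(\<mu>\<^sup>2)\<close>.\<close>

lemma N1_main_identity:
  "N1_main \<mu> S * (\<gamma>1 * \<sigma>12 * B \<mu>) - (S + \<sigma>12 * (1 - S)) * (B \<mu> - S) * Q_main \<mu> S = (B \<mu> - S) * F_main \<mu> S"
  using \<sigma>12_pos \<sigma>21_pos
    by (simp add: N1_main_def Q_main_def F_main_def P2_def P1_def P0_def field_simps power2_eq_square; algebra?)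

lemma N2_main_identity:
  "N2_main \<mu> S * (\<gamma>2 * \<sigma>21 * A \<mu>) - (S + \<sigma>21 * (1 - S)) * (A \<mu> - S) * Q_main \<mu> S = (A \<mu> - S) * F_main \<mu> S"
  using \<sigma>12_pos \<sigma>21_pos
    by (simp add: N2_main_def Q_main_def F_main_def P2_def P1_def P0_def field_simps power2_eq_square; algebra?)

lemma inv_\<sigma>12_le_inv_\<sigma>21: "1 / \<sigma>12 \<le> 1 / \<sigma>21" using \<sigma>21_pos \<sigma>21_le_\<sigma>12 by (simp add: divide_left_mono)
lemma \<gamma>2_div_\<sigma>12_le: "\<gamma>2 / \<sigma>12 \<le> \<gamma>2 / \<sigma>21" using \<gamma>2 \<sigma>21_pos \<sigma>21_le_\<sigma>12 by (simp add: divide_left_mono)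

definition F_rem_max :: real where "F_rem_max = (\<gamma>1 + \<gamma>2) / \<sigma>21 + (1 + 2 / \<sigma>21) * (\<gamma>1 + \<gamma>2 + 1)"

lemma F_rem_bound:
  assumes \<mu>: "0 \<le> \<mu>" "\<mu> \<le> 1" and S: "0 \<le> S" "S \<le> A \<mu>" "S \<le> B \<mu>" and AB: "A \<mu> \<le> 1" "B \<mu> \<le> 1"
  shows "\<bar>F_rem \<mu> S\<bar> \<le> F_rem_max"
proof -
  define T1 where "T1 = S^2 * (B \<mu> - S) * (\<gamma>2 / \<sigma>12)"
  define T2 where "T2 = S^2 * (A \<mu> - S) * (\<gamma>1 / \<sigma>21)"
  define T3 where "T3 = ((A \<mu> - S) * (B \<mu> - S)) * (((1 - S) + S * (1/\<sigma>12 + 1/\<sigma>21)) * (\<gamma>1 + \<gamma>2 + \<mu>))"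
  have e: "F_rem \<mu> S = - (T1 + T2 + T3)" unfolding F_rem_def T1_def T2_def T3_def
    using \<sigma>12_pos \<sigma>21_pos by (simp add: field_simps; algebra?)
  have S1: "S \<le> 1" using S AB by linarith
  have s20: "0 \<le> S^2" by simp
  have s21: "S^2 \<le> 1" using S S1 by (simp add: power_le_one)
  have bs: "0 \<le> B \<mu> - S" "B \<mu> - S \<le> 1" using S AB by auto
  have as: "0 \<le> A \<mu> - S" "A \<mu> - S \<le> 1" using S AB by auto
  have sqb0: "0 \<le> S^2 * (B \<mu> - S)" using bs by simp
  have sqb1: "S^2 * (B \<mu> - S) \<le> 1" using mult_le_by_le_one[OF s20 s21 bs] .
  have sqa0: "0 \<le> S^2 * (A \<mu> - S)" using as by simp
  have sqa1: "S^2 * (A \<mu> - S) \<le> 1" using mult_le_by_le_one[OF s20 s21 as] .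
  have T1: "0 \<le> T1" "T1 \<le> \<gamma>2 / \<sigma>21" unfolding T1_def
    using sqb0 \<gamma>2 \<sigma>12_pos mult_le_by_le_one[OF sqb0 sqb1 _ \<gamma>2_div_\<sigma>12_le] by simp_all
  have T2: "0 \<le> T2" "T2 \<le> \<gamma>1 / \<sigma>21" unfolding T2_def
    using sqa0 \<gamma>1 \<sigma>21_pos mult_le_by_le_one[OF sqa0 sqa1, of "\<gamma>1 / \<sigma>21" "\<gamma>1 / \<sigma>21"] by simp_all
  have uv0: "0 \<le> (A \<mu> - S) * (B \<mu> - S)" using as bs by simp
  have uv1: "(A \<mu> - S) * (B \<mu> - S) \<le> 1" using mult_le_by_le_one[OF as bs] .
  have f1: "0 \<le> (1 - S) + S * (1/\<sigma>12 + 1/\<sigma>21)" using S S1 \<sigma>12_pos \<sigma>21_pos by simp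
  have f2: "(1 - S) + S * (1/\<sigma>12 + 1/\<sigma>21) \<le> 1 + 2 / \<sigma>21"
  proof -
    have "1/\<sigma>12 + 1/\<sigma>21 \<le> 2 / \<sigma>21" using inv_\<sigma>12_le_inv_\<sigma>21 by simp
    hence "S * (1/\<sigma>12 + 1/\<sigma>21) \<le> 2 / \<sigma>21"
      using mult_le_by_le_one[OF S(1) S1, of "1/\<sigma>12 + 1/\<sigma>21" "2/\<sigma>21"] \<sigma>12_pos \<sigma>21_pos by simp
    thus ?thesis using S by simp
  qed
  have f3: "0 \<le> ((1 - S) + S * (1/\<sigma>12 + 1/\<sigma>21)) * (\<gamma>1 + \<gamma>2 + \<mu>)" using f1 \<gamma>1 \<gamma>2 \<mu> by simp
  have f4: "((1 - S) + S * (1/\<sigma>12 + 1/\<sigma>21)) * (\<gamma>1 + \<gamma>2 + \<mu>) \<le> (1 + 2 / \<sigma>21) * (\<gamma>1 + \<gamma>2 + 1)"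
    using mult_mono[OF f2, of "\<gamma>1 + \<gamma>2 + \<mu>" "\<gamma>1 + \<gamma>2 + 1"] f1 \<gamma>1 \<gamma>2 \<mu> \<sigma>21_pos by simp
  have T3: "0 \<le> T3" "T3 \<le> (1 + 2 / \<sigma>21) * (\<gamma>1 + \<gamma>2 + 1)" unfolding T3_def
    using uv0 f3 mult_le_by_le_one[OF uv0 uv1 f3 f4] by simp_all
  have "\<bar>F_rem \<mu> S\<bar> = T1 + T2 + T3" unfolding e using T1 T2 T3 by simp
  also have "\<dots> \<le> F_rem_max" unfolding F_rem_max_def using T1 T2 T3 by (simp add: add_divide_distrib)
  finally show ?thesis .
qed

lemma P2_bounds: "0 \<le> A \<mu> \<Longrightarrow> A \<mu> \<le> 1 \<Longrightarrow> 0 \<le> B \<mu> \<Longrightarrow> B \<mu> \<le> 1 \<Longrightarrow> 0 \<le> P2 \<mu> \<and> P2 \<mu> \<le> 2"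
proof -
  assume a: "0 \<le> A \<mu>" "A \<mu> \<le> 1" and b: "0 \<le> B \<mu>" "B \<mu> \<le> 1"
  have pq: "0 \<le> \<sigma>12 * (1 - \<sigma>21)" "\<sigma>12 * (1 - \<sigma>21) \<le> 1" "0 \<le> \<sigma>21 * (1 - \<sigma>12)" "\<sigma>21 * (1 - \<sigma>12) \<le> 1"
    using \<sigma>12_pos \<sigma>21_pos \<sigma>12_le_1 \<sigma>21_le_1 mult_le_by_le_one[of \<sigma>12 "1 - \<sigma>21" 1] mult_le_by_le_one[of \<sigma>21 "1 - \<sigma>12" 1] by auto
  have "\<sigma>12 * (1 - \<sigma>21) * B \<mu> \<le> 1" using mult_le_by_le_one[OF pq(1,2) b] .
  moreover have "\<sigma>21 * (1 - \<sigma>12) * A \<mu> \<le> 1" using mult_le_by_le_one[OF pq(3,4) a] .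
  moreover have "0 \<le> \<sigma>12 * (1 - \<sigma>21) * B \<mu>" using pq b by simp
  moreover have "0 \<le> \<sigma>21 * (1 - \<sigma>12) * A \<mu>" using pq a by simp
  ultimately show ?thesis unfolding P2_def by linarith
qed

lemma P1_le_2: "0 \<le> A \<mu> \<Longrightarrow> A \<mu> \<le> 1 \<Longrightarrow> 0 \<le> B \<mu> \<Longrightarrow> B \<mu> \<le> 1 \<Longrightarrow> P1 \<mu> \<le> 2"
proof -
  assume a: "0 \<le> A \<mu>" "A \<mu> \<le> 1" and b: "0 \<le> B \<mu>" "B \<mu> \<le> 1"
  have pq: "0 \<le> \<sigma>12 * \<sigma>21" "\<sigma>12 * \<sigma>21 \<le> 1"
    using \<sigma>12_pos \<sigma>21_pos \<sigma>12_le_1 \<sigma>21_le_1 mult_le_by_le_one[of \<sigma>12 \<sigma>21 1] by auto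
  have "\<sigma>12 * \<sigma>21 * (A \<mu> + B \<mu>) \<le> 2" using mult_le_by_le_one[OF pq, of "A \<mu> + B \<mu>" 2] a b by simp
  moreover have "0 \<le> (\<sigma>12 + \<sigma>21 - \<sigma>12 * \<sigma>21) * A \<mu> * B \<mu>"
  proof -
    have "\<sigma>12 + \<sigma>21 - \<sigma>12 * \<sigma>21 = \<sigma>12 + \<sigma>21 * (1 - \<sigma>12)" by (simp add: algebra_simps)
    have "\<sigma>12 * \<sigma>21 \<le> \<sigma>12" using \<sigma>12_pos \<sigma>21_le_1 by (simp add: mult_left_le)
    hence "0 \<le> \<sigma>12 + \<sigma>21 - \<sigma>12 * \<sigma>21" using \<sigma>21_pos by linarith
    thus ?thesis using a b by simp
  qed
  ultimately show ?thesis unfolding P1_def by linarith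
qed

lemma F_main_root_lower:
  assumes s: "0 < s" "s \<le> 1" and Fs: "F_main \<mu> s = 0"
    and AB: "0 < A \<mu>" "A \<mu> \<le> 1" "0 < B \<mu>" "B \<mu> \<le> 1"
  shows "\<sigma>12 * \<sigma>21 * A \<mu> * B \<mu> \<le> 4 * s"
proof -
  have P2: "0 \<le> P2 \<mu>" "P2 \<mu> \<le> 2" using P2_bounds AB by auto
  have P1: "P1 \<mu> \<le> 2" using P1_le_2 AB by auto
  have "P2 \<mu> * s \<le> 2" using mult_le_by_le_one[of s "P2 \<mu>" 2] s P2 by (simp add: mult.commute)
  hence "P2 \<mu> * s + P1 \<mu> \<le> 4" using P1 by linarith
  hence "s * (P2 \<mu> * s + P1 \<mu>) \<le> s * 4" using s by (intro mult_left_mono) auto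
  thus ?thesis using F_main_root[OF Fs] by simp
qed

lemma F_root_near_F_main_root:
  assumes \<mu>: "0 \<le> \<mu>" "\<mu> \<le> 1" and r: "0 \<le> r" "r \<le> A \<mu>" "r \<le> B \<mu>"
    and s: "0 < s" "s \<le> 1" and AB: "0 < A \<mu>" "A \<mu> \<le> 1" "0 < B \<mu>" "B \<mu> \<le> 1"
    and Fr: "F \<mu> r = 0" and Fs: "F_main \<mu> s = 0"
  shows "\<gamma>1 * \<gamma>2 * A \<mu> * B \<mu> * \<bar>r - s\<bar> \<le> \<mu> * F_rem_max"
proof -
  define K where "K = \<gamma>1 * \<gamma>2 / (\<sigma>12 * \<sigma>21)"
  have K0: "K > 0" unfolding K_def using \<gamma>1 \<gamma>2 \<sigma>12_pos \<sigma>21_pos by simp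
  define T where "T = P2 \<mu> * (r + s) + P1 \<mu>"
  have F_main_eq: "F_main \<mu> S = K * (P2 \<mu> * S^2 + P1 \<mu> * S + P0 \<mu>)" for S by (simp add: F_main_def K_def)
  have id: "F_main \<mu> r - F_main \<mu> s = K * (r - s) * T" unfolding F_main_eq T_def
    by (simp add: algebra_simps power2_eq_square)
  have P2: "0 \<le> P2 \<mu>" using P2_bounds AB by auto
  have pqAB_pos: "0 < \<sigma>12 * \<sigma>21 * A \<mu> * B \<mu>" using \<sigma>12_pos \<sigma>21_pos AB by simp
  have "P2 \<mu> * s + P1 \<mu> = \<sigma>12 * \<sigma>21 * A \<mu> * B \<mu> / s"
    using F_main_root[OF Fs] s by (simp add: field_simps)
  also have "\<dots> \<ge> \<sigma>12 * \<sigma>21 * A \<mu> * B \<mu>" using pqAB_pos s by (simp add: le_divide_eq mult_left_le)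
  finally have "P2 \<mu> * s + P1 \<mu> \<ge> \<sigma>12 * \<sigma>21 * A \<mu> * B \<mu>" .
  moreover have "P2 \<mu> * r \<ge> 0" using P2 r by simp
  ultimately have T: "T \<ge> \<sigma>12 * \<sigma>21 * A \<mu> * B \<mu>" unfolding T_def by (simp add: algebra_simps)
  have "\<bar>F_main \<mu> r\<bar> = K * \<bar>r - s\<bar> * T" using id Fs K0 T pqAB_pos by (simp add: abs_mult)
  also have "\<dots> \<ge> K * \<bar>r - s\<bar> * (\<sigma>12 * \<sigma>21 * A \<mu> * B \<mu>)" using T K0 by (intro mult_left_mono) auto
  finally have h1: "K * \<bar>r - s\<bar> * (\<sigma>12 * \<sigma>21 * A \<mu> * B \<mu>) \<le> \<bar>F_main \<mu> r\<bar>" .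
  have "K * \<bar>r - s\<bar> * (\<sigma>12 * \<sigma>21 * A \<mu> * B \<mu>) = \<gamma>1 * \<gamma>2 * A \<mu> * B \<mu> * \<bar>r - s\<bar>"
    unfolding K_def using \<sigma>12_pos \<sigma>21_pos by (simp add: field_simps)
  moreover have "\<bar>F_main \<mu> r\<bar> = \<mu> * \<bar>F_rem \<mu> r\<bar>"
  proof -
    have "F_main \<mu> r = - (\<mu> * F_rem \<mu> r)" using Fr F_split[of \<mu> r] by simp
    thus ?thesis using \<mu> by (simp add: abs_mult)
  qed
  moreover have "\<mu> * \<bar>F_rem \<mu> r\<bar> \<le> \<mu> * F_rem_max"
    using F_rem_bound[OF \<mu> r AB(2,4)] \<mu> by (intro mult_left_mono) auto
  ultimately show ?thesis using h1 by linarith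
qed

lemma F_main_root_gap_bound:
  assumes s: "0 \<le> s" "s \<le> A \<mu>" "s \<le> B \<mu>" and AB: "A \<mu> \<le> 1" "B \<mu> \<le> 1"
    and Fs: "F_main \<mu> s = 0"
  shows "(1 - s) * (s^2 - (A \<mu> - s) * (B \<mu> - s)) \<le> s * ((A \<mu> - s) + (B \<mu> - s)) / \<sigma>21"
proof -
  have "\<gamma>1 * \<gamma>2 * ((1 - s) * (s^2 - (A \<mu> - s) * (B \<mu> - s))
      - s * (A \<mu> * (B \<mu> - s) / \<sigma>12 + B \<mu> * (A \<mu> - s) / \<sigma>21)) = 0"
    using Fs F_main_alt[of \<mu> s] by simp
  hence "(1 - s) * (s^2 - (A \<mu> - s) * (B \<mu> - s))
      = s * (A \<mu> * (B \<mu> - s) / \<sigma>12 + B \<mu> * (A \<mu> - s) / \<sigma>21)"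
    using \<gamma>1 \<gamma>2 by simp
  also have "\<dots> \<le> s * ((B \<mu> - s) / \<sigma>21 + (A \<mu> - s) / \<sigma>21)"
  proof -
    have "A \<mu> * (B \<mu> - s) / \<sigma>12 \<le> (B \<mu> - s) / \<sigma>12"
      "B \<mu> * (A \<mu> - s) / \<sigma>21 \<le> (A \<mu> - s) / \<sigma>21"
      using s AB \<sigma>12_pos \<sigma>21_pos by (simp_all add: divide_right_mono mult_left_le_one_le)
    moreover have "(B \<mu> - s) / \<sigma>12 \<le> (B \<mu> - s) / \<sigma>21"
      using s \<sigma>21_pos \<sigma>21_le_\<sigma>12 by (simp add: divide_left_mono)
    ultimately show ?thesis using s by (intro mult_left_mono) auto
  qed
  also have "\<dots> = s * ((A \<mu> - s) + (B \<mu> - s)) / \<sigma>21" using \<sigma>21_pos by (simp add: field_simps)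
  finally show ?thesis .
qed

text \<open>If the gap \<open>(A - s) + (B - s)\<close> were below \<open>s\<close>, then \<open>(A - s)(B - s) \<le> s\<^sup>2/4\<close> and the
  left-hand side of the previous bound would be of order \<open>s\<^sup>2\<close>, too large for its right-hand side.\<close>

lemma F_main_root_gap_lower:
  assumes s: "0 < s" "s < A \<mu>" "s < B \<mu>" and Fs: "F_main \<mu> s = 0"
    and AB: "A \<mu> \<le> 1 - \<eta>" "B \<mu> \<le> 1 - \<eta>" and \<eta>: "\<eta> > 0"
  shows "3 * \<eta> * \<sigma>21 * s \<le> 4 * ((A \<mu> - s) + (B \<mu> - s))"
proof -
  define u v w where "u = A \<mu> - s" and "v = B \<mu> - s" and "w = (A \<mu> - s) + (B \<mu> - s)"
  have uv: "u > 0" "v > 0" and w: "w = u + v" using s by (auto simp: u_def v_def w_def)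
  have eq: "(1 - s) * (s^2 - u * v) \<le> s * w / \<sigma>21"
    using F_main_root_gap_bound[of s \<mu>] s AB \<eta> Fs unfolding u_def v_def w_def by simp
  show ?thesis
  proof (cases "w \<ge> s")
    case True
    have "\<eta> * \<sigma>21 \<le> 1" using s AB \<eta> \<sigma>21_pos \<sigma>21_le_1 mult_le_by_le_one[of \<eta> \<sigma>21 1] by simp
    hence "3 * \<eta> * \<sigma>21 * s \<le> 3 * s" using s by (simp add: mult.assoc mult_left_le_one_le)
    moreover have "3 * s \<le> 4 * w" using True s by linarith
    ultimately show ?thesis unfolding w_def by (rule order_trans)
  next
    case False
    have "0 \<le> (u - v)^2" by simp
    hence "4 * (u * v) \<le> w^2" unfolding w by (simp add: power2_eq_square algebra_simps)
    moreover have "w^2 \<le> s^2" using False uv w by (simp add: power_mono)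
    ultimately have "3 * s^2 / 4 \<le> s^2 - u * v" by simp
    moreover have "\<eta> \<le> 1 - s" using s AB by linarith
    ultimately have "\<eta> * (3 * s^2 / 4) \<le> (1 - s) * (s^2 - u * v)" using \<eta> s by (intro mult_mono) auto
    also have "\<dots> \<le> s * w / \<sigma>21" by (rule eq)
    finally have "s * (3 * \<eta> * \<sigma>21 * s) \<le> s * (4 * w)"
      using \<sigma>21_pos by (simp add: field_simps power2_eq_square)
    thus ?thesis using s unfolding w_def by simp
  qed
qed

lemma Q_main_lower:
  assumes S: "0 \<le> S" "S \<le> A \<mu>" "S \<le> B \<mu>"
  shows "\<gamma>1 * \<gamma>2 * (S * ((A \<mu> - S) + (B \<mu> - S))) \<le> Q_main \<mu> S"
proof -
  have "S * (B \<mu> - S) \<le> A \<mu> * (B \<mu> - S)" using S by (intro mult_right_mono) auto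
  also have "\<dots> \<le> A \<mu> * (B \<mu> - S) / \<sigma>12"
    using S \<sigma>12_pos \<sigma>12_le_1 by (simp add: le_divide_eq mult_left_le)
  finally have 1: "S * (B \<mu> - S) \<le> A \<mu> * (B \<mu> - S) / \<sigma>12" .
  have "S * (A \<mu> - S) \<le> B \<mu> * (A \<mu> - S)" using S by (intro mult_right_mono) auto
  also have "\<dots> \<le> B \<mu> * (A \<mu> - S) / \<sigma>21"
    using S \<sigma>21_pos \<sigma>21_le_1 by (simp add: le_divide_eq mult_left_le)
  finally have 2: "S * (A \<mu> - S) \<le> B \<mu> * (A \<mu> - S) / \<sigma>21" .
  have "S * ((A \<mu> - S) + (B \<mu> - S)) \<le> A \<mu> * (B \<mu> - S) / \<sigma>12 + B \<mu> * (A \<mu> - S) / \<sigma>21"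
    using 1 2 by (simp add: algebra_simps)
  thus ?thesis unfolding Q_main_def using \<gamma>1 \<gamma>2 by (intro mult_left_mono) auto
qed

definition Q_rem_max :: real where "Q_rem_max = (\<gamma>1 + \<gamma>2) / \<sigma>21 + 2 * (\<gamma>1 + \<gamma>2 + 1) / \<sigma>21"

lemma Q_rem_bounds:
  assumes \<mu>: "0 \<le> \<mu>" "\<mu> \<le> 1" and S: "0 \<le> S" "S \<le> A \<mu>" "S \<le> B \<mu>" and AB: "A \<mu> \<le> 1" "B \<mu> \<le> 1"
  shows "0 \<le> Q_rem \<mu> S \<and> Q_rem \<mu> S \<le> Q_rem_max"
proof -
  have S1: "S \<le> 1" using S AB by linarith
  have bs: "0 \<le> B \<mu> - S" "B \<mu> - S \<le> 1" using S AB by auto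
  have as: "0 \<le> A \<mu> - S" "A \<mu> - S \<le> 1" using S AB by auto
  define T1 where "T1 = ((B \<mu> - S) * S) * (\<gamma>2 / \<sigma>12)"
  define T2 where "T2 = ((A \<mu> - S) * S) * (\<gamma>1 / \<sigma>21)"
  define T3 where "T3 = ((A \<mu> - S) * (B \<mu> - S)) * ((\<gamma>1 + \<gamma>2 + \<mu>) * (1/\<sigma>12 + 1/\<sigma>21))"
  have e: "Q_rem \<mu> S = T1 + T2 + T3" unfolding Q_rem_def T1_def T2_def T3_def
    using \<sigma>12_pos \<sigma>21_pos by (simp add: field_simps; algebra?)
  have x1: "0 \<le> (B \<mu> - S) * S" "(B \<mu> - S) * S \<le> 1" using bs S mult_le_by_le_one[OF bs S(1) S1] by auto
  have x2: "0 \<le> (A \<mu> - S) * S" "(A \<mu> - S) * S \<le> 1" using as S mult_le_by_le_one[OF as S(1) S1] by auto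
  have x3: "0 \<le> (A \<mu> - S) * (B \<mu> - S)" "(A \<mu> - S) * (B \<mu> - S) \<le> 1"
    using as bs mult_le_by_le_one[OF as bs] by auto
  have T1: "0 \<le> T1" "T1 \<le> \<gamma>2 / \<sigma>21" unfolding T1_def
    using x1 \<gamma>2 \<sigma>12_pos mult_le_by_le_one[OF x1 _ \<gamma>2_div_\<sigma>12_le] by simp_all
  have T2: "0 \<le> T2" "T2 \<le> \<gamma>1 / \<sigma>21" unfolding T2_def
    using x2 \<gamma>1 \<sigma>21_pos mult_le_by_le_one[OF x2, of "\<gamma>1 / \<sigma>21" "\<gamma>1 / \<sigma>21"] by simp_all
  have y: "0 \<le> (\<gamma>1 + \<gamma>2 + \<mu>) * (1/\<sigma>12 + 1/\<sigma>21)" using \<gamma>1 \<gamma>2 \<mu> \<sigma>12_pos \<sigma>21_pos by simp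
  have y2: "(\<gamma>1 + \<gamma>2 + \<mu>) * (1/\<sigma>12 + 1/\<sigma>21) \<le> (\<gamma>1 + \<gamma>2 + 1) * (2 / \<sigma>21)"
    using inv_\<sigma>12_le_inv_\<sigma>21 \<gamma>1 \<gamma>2 \<mu> \<sigma>12_pos \<sigma>21_pos by (intro mult_mono) auto
  have T3: "0 \<le> T3" "T3 \<le> (\<gamma>1 + \<gamma>2 + 1) * (2 / \<sigma>21)" unfolding T3_def
    using x3 y mult_le_by_le_one[OF x3 y y2] by simp_all
  show ?thesis unfolding e Q_rem_max_def using T1 T2 T3 by (simp add: add_divide_distrib)
qed

lemma Q_main_diff: "Q_main \<mu> r - Q_main \<mu> s = - (r - s) * (\<gamma>1 * \<gamma>2 * (A \<mu> / \<sigma>12 + B \<mu> / \<sigma>21))"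
  unfolding Q_main_def by (simp add: algebra_simps diff_divide_distrib)

lemma Q_main_coeff_bound:
  "0 < A \<mu> \<Longrightarrow> A \<mu> \<le> 1 \<Longrightarrow> 0 < B \<mu> \<Longrightarrow> B \<mu> \<le> 1 \<Longrightarrow> \<bar>\<gamma>1 * \<gamma>2 * (A \<mu> / \<sigma>12 + B \<mu> / \<sigma>21)\<bar> \<le> \<gamma>1 * \<gamma>2 * (2 / \<sigma>21)"
proof -
  assume a: "0 < A \<mu>" "A \<mu> \<le> 1" and b: "0 < B \<mu>" "B \<mu> \<le> 1"
  have "A \<mu> / \<sigma>12 \<le> 1 / \<sigma>21" using a inv_\<sigma>12_le_inv_\<sigma>21 \<sigma>12_pos by (smt (verit) divide_right_mono)
  moreover have "B \<mu> / \<sigma>21 \<le> 1 / \<sigma>21" using b \<sigma>21_pos by (simp add: divide_right_mono)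
  moreover have "0 \<le> A \<mu> / \<sigma>12 + B \<mu> / \<sigma>21" using a b \<sigma>12_pos \<sigma>21_pos by simp
  ultimately have "\<bar>A \<mu> / \<sigma>12 + B \<mu> / \<sigma>21\<bar> \<le> 2 / \<sigma>21" by simp
  hence "\<gamma>1 * \<gamma>2 * \<bar>A \<mu> / \<sigma>12 + B \<mu> / \<sigma>21\<bar> \<le> \<gamma>1 * \<gamma>2 * (2 / \<sigma>21)"
    using \<gamma>1 \<gamma>2 by (intro mult_left_mono) auto
  thus ?thesis using \<gamma>1 \<gamma>2 by (simp add: abs_mult)
qed

lemma N1_main_lipschitz:
  assumes r: "0 \<le> r" "r \<le> A \<mu>" "r \<le> B \<mu>" and s: "0 \<le> s" "s \<le> A \<mu>" "s \<le> B \<mu>"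
    and AB: "A \<mu> \<le> 1" "B \<mu> \<le> 1"
  shows "\<bar>N1_main \<mu> r - N1_main \<mu> s\<bar> \<le> (5 * \<gamma>2 / \<sigma>21) * \<bar>r - s\<bar>"
proof -
  define z0 where "z0 = \<gamma>2 * A \<mu> / \<sigma>21"
  define z1 where "z1 = \<gamma>2 * (1 / \<sigma>12 - 1 / \<sigma>21)"
  have N: "N1_main \<mu> S = (1 - S) * (B \<mu> - S) * (z0 + z1 * S)" for S
    unfolding N1_main_def z0_def z1_def by (simp add: algebra_simps diff_divide_distrib add_divide_distrib)
  have Z: "\<bar>z0 + z1 * r\<bar> \<le> 2 * \<gamma>2 / \<sigma>21"
  proof -
    have e: "z0 + z1 * r = \<gamma>2 * (r / \<sigma>12 + (A \<mu> - r) / \<sigma>21)" unfolding z0_def z1_def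
      by (simp add: algebra_simps diff_divide_distrib add_divide_distrib)
    have "r / \<sigma>12 \<le> 1 / \<sigma>21" using r AB inv_\<sigma>12_le_inv_\<sigma>21 \<sigma>12_pos by (smt (verit) divide_right_mono)
    moreover have "(A \<mu> - r) / \<sigma>21 \<le> 1 / \<sigma>21" using r AB \<sigma>21_pos by (simp add: divide_right_mono)
    moreover have "0 \<le> r / \<sigma>12 + (A \<mu> - r) / \<sigma>21" using r \<sigma>12_pos \<sigma>21_pos by simp
    ultimately have "\<bar>r / \<sigma>12 + (A \<mu> - r) / \<sigma>21\<bar> \<le> 2 / \<sigma>21" by simp
    hence "\<gamma>2 * \<bar>r / \<sigma>12 + (A \<mu> - r) / \<sigma>21\<bar> \<le> \<gamma>2 * (2 / \<sigma>21)" using \<gamma>2 by (intro mult_left_mono) auto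
    thus ?thesis unfolding e using \<gamma>2 by (simp add: abs_mult ac_simps)
  qed
  have Z1: "\<bar>z1\<bar> \<le> \<gamma>2 / \<sigma>21"
  proof -
    have "0 \<le> 1 / \<sigma>21 - 1 / \<sigma>12" using inv_\<sigma>12_le_inv_\<sigma>21 by simp
    moreover have "1 / \<sigma>21 - 1 / \<sigma>12 \<le> 1 / \<sigma>21" using \<sigma>12_pos by simp
    ultimately have "\<bar>1 / \<sigma>12 - 1 / \<sigma>21\<bar> \<le> 1 / \<sigma>21" by simp
    hence "\<gamma>2 * \<bar>1 / \<sigma>12 - 1 / \<sigma>21\<bar> \<le> \<gamma>2 * (1 / \<sigma>21)" using \<gamma>2 by (intro mult_left_mono) auto
    thus ?thesis unfolding z1_def using \<gamma>2 by (simp add: abs_mult)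
  qed
  have "\<bar>N1_main \<mu> r - N1_main \<mu> s\<bar> \<le> (2 * (2 * \<gamma>2 / \<sigma>21) + \<gamma>2 / \<sigma>21) * \<bar>r - s\<bar>"
    unfolding N using lipschitz_cubic_on_box[OF r(1,3) s(1,3) AB(2) Z Z1] .
  thus ?thesis by simp
qed

lemma N2_main_lipschitz:
  assumes r: "0 \<le> r" "r \<le> A \<mu>" "r \<le> B \<mu>" and s: "0 \<le> s" "s \<le> A \<mu>" "s \<le> B \<mu>"
    and AB: "A \<mu> \<le> 1" "B \<mu> \<le> 1"
  shows "\<bar>N2_main \<mu> r - N2_main \<mu> s\<bar> \<le> (5 * \<gamma>1 / \<sigma>21) * \<bar>r - s\<bar>"
proof -
  define z0 where "z0 = \<gamma>1 * B \<mu> / \<sigma>12"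
  define z1 where "z1 = \<gamma>1 * (1 / \<sigma>21 - 1 / \<sigma>12)"
  have N: "N2_main \<mu> S = (1 - S) * (A \<mu> - S) * (z0 + z1 * S)" for S
    unfolding N2_main_def z0_def z1_def by (simp add: algebra_simps diff_divide_distrib add_divide_distrib)
  have Z: "\<bar>z0 + z1 * r\<bar> \<le> 2 * \<gamma>1 / \<sigma>21"
  proof -
    have e: "z0 + z1 * r = \<gamma>1 * (r / \<sigma>21 + (B \<mu> - r) / \<sigma>12)" unfolding z0_def z1_def
      by (simp add: algebra_simps diff_divide_distrib add_divide_distrib)
    have "(B \<mu> - r) / \<sigma>12 \<le> 1 / \<sigma>21"
      using r AB inv_\<sigma>12_le_inv_\<sigma>21 \<sigma>12_pos by (smt (verit) divide_right_mono)
    moreover have "r / \<sigma>21 \<le> 1 / \<sigma>21" using r AB \<sigma>21_pos by (simp add: divide_right_mono)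
    moreover have "0 \<le> r / \<sigma>21 + (B \<mu> - r) / \<sigma>12" using r \<sigma>12_pos \<sigma>21_pos by simp
    ultimately have "\<bar>r / \<sigma>21 + (B \<mu> - r) / \<sigma>12\<bar> \<le> 2 / \<sigma>21" by simp
    hence "\<gamma>1 * \<bar>r / \<sigma>21 + (B \<mu> - r) / \<sigma>12\<bar> \<le> \<gamma>1 * (2 / \<sigma>21)" using \<gamma>1 by (intro mult_left_mono) auto
    thus ?thesis unfolding e using \<gamma>1 by (simp add: abs_mult ac_simps)
  qed
  have Z1: "\<bar>z1\<bar> \<le> \<gamma>1 / \<sigma>21"
  proof -
    have "0 \<le> 1 / \<sigma>21 - 1 / \<sigma>12" using inv_\<sigma>12_le_inv_\<sigma>21 by simp
    moreover have "1 / \<sigma>21 - 1 / \<sigma>12 \<le> 1 / \<sigma>21" using \<sigma>12_pos by simp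
    ultimately have "\<bar>1 / \<sigma>21 - 1 / \<sigma>12\<bar> \<le> 1 / \<sigma>21" by simp
    hence "\<gamma>1 * \<bar>1 / \<sigma>21 - 1 / \<sigma>12\<bar> \<le> \<gamma>1 * (1 / \<sigma>21)" using \<gamma>1 by (intro mult_left_mono) auto
    thus ?thesis unfolding z1_def using \<gamma>1 by (simp add: abs_mult)
  qed
  have "\<bar>N2_main \<mu> r - N2_main \<mu> s\<bar> \<le> (2 * (2 * \<gamma>1 / \<sigma>21) + \<gamma>1 / \<sigma>21) * \<bar>r - s\<bar>"
    unfolding N using lipschitz_cubic_on_box[OF r(1,2) s(1,2) AB(1) Z Z1] .
  thus ?thesis by simp
qed

lemma N1_main_bounds:
  assumes S: "0 \<le> S" "S \<le> A \<mu>" "S \<le> B \<mu>" and AB: "A \<mu> \<le> 1" "B \<mu> \<le> 1"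
  shows "0 \<le> N1_main \<mu> S \<and> N1_main \<mu> S \<le> 2 * \<gamma>2 / \<sigma>21"
proof -
  have z0: "0 \<le> \<gamma>2 * (S / \<sigma>12 + (A \<mu> - S) / \<sigma>21)" using S \<gamma>2 \<sigma>12_pos \<sigma>21_pos by simp
  have "S / \<sigma>12 \<le> 1 / \<sigma>21" using S AB inv_\<sigma>12_le_inv_\<sigma>21 \<sigma>12_pos by (smt (verit) divide_right_mono)
  moreover have "(A \<mu> - S) / \<sigma>21 \<le> 1 / \<sigma>21" using S AB \<sigma>21_pos by (simp add: divide_right_mono)
  ultimately have "S / \<sigma>12 + (A \<mu> - S) / \<sigma>21 \<le> 2 / \<sigma>21" by simp
  hence z1': "\<gamma>2 * (S / \<sigma>12 + (A \<mu> - S) / \<sigma>21) \<le> \<gamma>2 * (2 / \<sigma>21)" using \<gamma>2 by (intro mult_left_mono) auto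
  have e2: "\<gamma>2 * (2 / \<sigma>21) = 2 * \<gamma>2 / \<sigma>21" by simp
  note z1 = z1'[unfolded e2]
  have x: "0 \<le> (1 - S) * (B \<mu> - S)" "(1 - S) * (B \<mu> - S) \<le> 1"
    using S AB mult_le_by_le_one[of "1 - S" "B \<mu> - S" 1] by auto
  show ?thesis unfolding N1_main_def using mult_le_by_le_one[OF x z0 z1] x z0 by simp
qed

lemma N2_main_bounds:
  assumes S: "0 \<le> S" "S \<le> A \<mu>" "S \<le> B \<mu>" and AB: "A \<mu> \<le> 1" "B \<mu> \<le> 1"
  shows "0 \<le> N2_main \<mu> S \<and> N2_main \<mu> S \<le> 2 * \<gamma>1 / \<sigma>21"
proof -
  have z0: "0 \<le> \<gamma>1 * (S / \<sigma>21 + (B \<mu> - S) / \<sigma>12)" using S \<gamma>1 \<sigma>12_pos \<sigma>21_pos by simp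
  have "(B \<mu> - S) / \<sigma>12 \<le> 1 / \<sigma>21"
    using S AB inv_\<sigma>12_le_inv_\<sigma>21 \<sigma>12_pos by (smt (verit) divide_right_mono)
  moreover have "S / \<sigma>21 \<le> 1 / \<sigma>21" using S AB \<sigma>21_pos by (simp add: divide_right_mono)
  ultimately have "S / \<sigma>21 + (B \<mu> - S) / \<sigma>12 \<le> 2 / \<sigma>21" by simp
  hence z1': "\<gamma>1 * (S / \<sigma>21 + (B \<mu> - S) / \<sigma>12) \<le> \<gamma>1 * (2 / \<sigma>21)" using \<gamma>1 by (intro mult_left_mono) auto
  have e2: "\<gamma>1 * (2 / \<sigma>21) = 2 * \<gamma>1 / \<sigma>21" by simp
  note z1 = z1'[unfolded e2]
  have x: "0 \<le> (1 - S) * (A \<mu> - S)" "(1 - S) * (A \<mu> - S) \<le> 1"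
    using S AB mult_le_by_le_one[of "1 - S" "A \<mu> - S" 1] by auto
  show ?thesis unfolding N2_main_def using mult_le_by_le_one[OF x z0 z1] x z0 by simp
qed

lemma Q_estimates:
  assumes \<mu>: "0 \<le> \<mu>" "\<mu> \<le> 1" and AB: "0 < A \<mu>" "A \<mu> \<le> 1" "0 < B \<mu>" "B \<mu> \<le> 1"
    and r: "0 < r" "r < A \<mu>" "r < B \<mu>" and s: "0 < s" "s < A \<mu>" "s < B \<mu>"
    and rl: "rl \<le> r" "0 < rl" and wl: "wl \<le> (A \<mu> - r) + (B \<mu> - r)" "0 < wl"
    and sl: "sl \<le> s" "0 < sl" and wl2: "wl2 \<le> (A \<mu> - s) + (B \<mu> - s)" "0 < wl2"
    and dlt: "\<bar>r - s\<bar> \<le> \<delta>"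
  shows "Q \<mu> r \<ge> \<gamma>1 * \<gamma>2 * (rl * wl)" "Q_main \<mu> s \<ge> \<gamma>1 * \<gamma>2 * (sl * wl2)"
    "\<bar>Q \<mu> r - Q_main \<mu> s\<bar> \<le> \<gamma>1 * \<gamma>2 * (2 / \<sigma>21) * \<delta> + \<mu> * Q_rem_max"
proof -
  have rr: "0 \<le> r" "r \<le> A \<mu>" "r \<le> B \<mu>" using r by auto
  have ss: "0 \<le> s" "s \<le> A \<mu>" "s \<le> B \<mu>" using s by auto
  have Q_rem: "0 \<le> Q_rem \<mu> r" "Q_rem \<mu> r \<le> Q_rem_max" using Q_rem_bounds[OF \<mu> rr AB(2,4)] by auto
  have "\<gamma>1 * \<gamma>2 * (rl * wl) \<le> \<gamma>1 * \<gamma>2 * (r * ((A \<mu> - r) + (B \<mu> - r)))"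
    using rl wl \<gamma>1 \<gamma>2 by (intro mult_left_mono mult_mono) auto
  also have "\<dots> \<le> Q_main \<mu> r" using Q_main_lower[OF rr] .
  also have "\<dots> \<le> Q \<mu> r" unfolding Q_split using Q_rem \<mu> by simp
  finally show "Q \<mu> r \<ge> \<gamma>1 * \<gamma>2 * (rl * wl)" .
  have "\<gamma>1 * \<gamma>2 * (sl * wl2) \<le> \<gamma>1 * \<gamma>2 * (s * ((A \<mu> - s) + (B \<mu> - s)))"
    using sl wl2 \<gamma>1 \<gamma>2 by (intro mult_left_mono mult_mono) auto
  also have "\<dots> \<le> Q_main \<mu> s" using Q_main_lower[OF ss] .
  finally show "Q_main \<mu> s \<ge> \<gamma>1 * \<gamma>2 * (sl * wl2)" .
  have "Q \<mu> r - Q_main \<mu> s = (Q_main \<mu> r - Q_main \<mu> s) + \<mu> * Q_rem \<mu> r" unfolding Q_split by simp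
  also have "\<dots> = - (r - s) * (\<gamma>1 * \<gamma>2 * (A \<mu> / \<sigma>12 + B \<mu> / \<sigma>21)) + \<mu> * Q_rem \<mu> r" unfolding Q_main_diff ..
  finally have e: "Q \<mu> r - Q_main \<mu> s = - (r - s) * (\<gamma>1 * \<gamma>2 * (A \<mu> / \<sigma>12 + B \<mu> / \<sigma>21)) + \<mu> * Q_rem \<mu> r" .
  have d0: "0 \<le> \<delta>" using dlt abs_ge_zero[of "r - s"] by linarith
  have cq: "0 \<le> \<gamma>1 * \<gamma>2 * (2 / \<sigma>21)" using \<gamma>1 \<gamma>2 \<sigma>21_pos by simp
  have h0: "\<bar>\<gamma>1 * \<gamma>2 * (A \<mu> / \<sigma>12 + B \<mu> / \<sigma>21)\<bar> * \<bar>r - s\<bar> \<le> \<gamma>1 * \<gamma>2 * (2 / \<sigma>21) * \<delta>"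
    using mult_mono[OF Q_main_coeff_bound[OF AB] dlt cq abs_ge_zero] .
  have "\<bar>- (r - s) * (\<gamma>1 * \<gamma>2 * (A \<mu> / \<sigma>12 + B \<mu> / \<sigma>21))\<bar> = \<bar>\<gamma>1 * \<gamma>2 * (A \<mu> / \<sigma>12 + B \<mu> / \<sigma>21)\<bar> * \<bar>r - s\<bar>"
    by (simp add: abs_mult mult.commute abs_minus_commute)
  with h0 have h1: "\<bar>- (r - s) * (\<gamma>1 * \<gamma>2 * (A \<mu> / \<sigma>12 + B \<mu> / \<sigma>21))\<bar> \<le> \<gamma>1 * \<gamma>2 * (2 / \<sigma>21) * \<delta>" by simp
  have h2: "\<bar>\<mu> * Q_rem \<mu> r\<bar> \<le> \<mu> * Q_rem_max" using abs_mult_le_nonneg[OF \<mu>(1) Q_rem] .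
  show "\<bar>Q \<mu> r - Q_main \<mu> s\<bar> \<le> \<gamma>1 * \<gamma>2 * (2 / \<sigma>21) * \<delta> + \<mu> * Q_rem_max"
    unfolding e by (rule order_trans[OF abs_triangle_ineq add_mono[OF h1 h2]])
qed

lemma I1_ratio_estimate:
  assumes \<mu>: "0 \<le> \<mu>" "\<mu> \<le> 1" and AB: "0 < A \<mu>" "A \<mu> \<le> 1" "0 < B \<mu>" "B \<mu> \<le> 1"
    and r: "0 < r" "r < A \<mu>" "r < B \<mu>" and s: "0 < s" "s < A \<mu>" "s < B \<mu>" and Fs: "F_main \<mu> s = 0"
    and rl: "rl \<le> r" "0 < rl" and wl: "wl \<le> (A \<mu> - r) + (B \<mu> - r)" "0 < wl"
    and sl: "sl \<le> s" "0 < sl" and wl2: "wl2 \<le> (A \<mu> - s) + (B \<mu> - s)" "0 < wl2"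
    and dlt: "\<bar>r - s\<bar> \<le> \<delta>"
  shows "\<bar>(1 - r) * X1 \<mu> r / Q \<mu> r - (s + \<sigma>12 * (1 - s)) / (\<gamma>1 * \<sigma>12) * (1 - 1 / B \<mu> * s)\<bar>
     \<le> (5 * \<gamma>2 / \<sigma>21 * \<delta> + \<mu> * (1 / \<sigma>21)) / (\<gamma>1 * \<gamma>2 * (rl * wl))
       + 2 * \<gamma>2 / \<sigma>21 * (\<gamma>1 * \<gamma>2 * (2 / \<sigma>21) * \<delta> + \<mu> * Q_rem_max) / (\<gamma>1 * \<gamma>2 * (rl * wl) * (\<gamma>1 * \<gamma>2 * (sl * wl2)))"
proof -
  note C = Q_estimates[OF \<mu> AB r s rl wl sl wl2 dlt]
  have rr: "0 \<le> r" "r \<le> A \<mu>" "r \<le> B \<mu>" using r by auto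
  have ss: "0 \<le> s" "s \<le> A \<mu>" "s \<le> B \<mu>" using s by auto
  have d1: "0 < \<gamma>1 * \<gamma>2 * (rl * wl)" using \<gamma>1 \<gamma>2 rl wl by simp
  have d2: "0 < \<gamma>1 * \<gamma>2 * (sl * wl2)" using \<gamma>1 \<gamma>2 sl wl2 by simp
  have Qs: "Q_main \<mu> s > 0" using C(2) d2 by linarith
  have bv: "(s + \<sigma>12 * (1 - s)) / (\<gamma>1 * \<sigma>12) * (1 - 1 / B \<mu> * s) = N1_main \<mu> s / Q_main \<mu> s"
  proof -
    have "N1_main \<mu> s * (\<gamma>1 * \<sigma>12 * B \<mu>) = (s + \<sigma>12 * (1 - s)) * (B \<mu> - s) * Q_main \<mu> s"
      using N1_main_identity[of \<mu> s] Fs by simp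
    thus ?thesis using Qs AB \<gamma>1 \<sigma>12_pos by (simp add: field_simps)
  qed
  have n1: "0 \<le> (1 - r) * (B \<mu> - r) * (A \<mu> - r) \<and> (1 - r) * (B \<mu> - r) * (A \<mu> - r) \<le> 1"
    using r AB by (intro mult3_unit_interval) auto
  have "\<bar>(1 - r) * X1 \<mu> r - N1_main \<mu> s\<bar> = \<bar>(N1_main \<mu> r - N1_main \<mu> s) + \<mu> * ((1 - r) * (B \<mu> - r) * (A \<mu> - r) / \<sigma>21)\<bar>"
    unfolding N1_split by simp
  also have "\<dots> \<le> 5 * \<gamma>2 / \<sigma>21 * \<delta> + \<mu> * (1 / \<sigma>21)"
  proof -
    have "\<bar>N1_main \<mu> r - N1_main \<mu> s\<bar> \<le> 5 * \<gamma>2 / \<sigma>21 * \<delta>"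
      using N1_main_lipschitz[OF rr ss AB(2,4)] dlt \<gamma>2 \<sigma>21_pos
        by (smt (verit) mult_left_mono divide_nonneg_pos)
    moreover have "\<bar>\<mu> * ((1 - r) * (B \<mu> - r) * (A \<mu> - r) / \<sigma>21)\<bar> \<le> \<mu> * (1 / \<sigma>21)"
      using abs_mult_le_nonneg[OF \<mu>(1), of "(1 - r) * (B \<mu> - r) * (A \<mu> - r) / \<sigma>21" "1 / \<sigma>21"] n1 \<sigma>21_pos
      by (simp add: divide_right_mono)
    ultimately show ?thesis by (rule order_trans[OF abs_triangle_ineq add_mono])
  qed
  finally have a: "\<bar>(1 - r) * X1 \<mu> r - N1_main \<mu> s\<bar> \<le> 5 * \<gamma>2 / \<sigma>21 * \<delta> + \<mu> * (1 / \<sigma>21)" .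
  have n: "\<bar>N1_main \<mu> s\<bar> \<le> 2 * \<gamma>2 / \<sigma>21" using N1_main_bounds[OF ss AB(2,4)] by simp
  show ?thesis unfolding bv using abs_diff_divide_le[OF C(1) d1 C(2) d2 a C(3) n] .
qed

lemma I2_ratio_estimate:
  assumes \<mu>: "0 \<le> \<mu>" "\<mu> \<le> 1" and AB: "0 < A \<mu>" "A \<mu> \<le> 1" "0 < B \<mu>" "B \<mu> \<le> 1"
    and r: "0 < r" "r < A \<mu>" "r < B \<mu>" and s: "0 < s" "s < A \<mu>" "s < B \<mu>" and Fs: "F_main \<mu> s = 0"
    and rl: "rl \<le> r" "0 < rl" and wl: "wl \<le> (A \<mu> - r) + (B \<mu> - r)" "0 < wl"
    and sl: "sl \<le> s" "0 < sl" and wl2: "wl2 \<le> (A \<mu> - s) + (B \<mu> - s)" "0 < wl2"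
    and dlt: "\<bar>r - s\<bar> \<le> \<delta>"
  shows "\<bar>(1 - r) * X2 \<mu> r / Q \<mu> r - (s + \<sigma>21 * (1 - s)) / (\<gamma>2 * \<sigma>21) * (1 - 1 / A \<mu> * s)\<bar>
     \<le> (5 * \<gamma>1 / \<sigma>21 * \<delta> + \<mu> * (1 / \<sigma>21)) / (\<gamma>1 * \<gamma>2 * (rl * wl))
       + 2 * \<gamma>1 / \<sigma>21 * (\<gamma>1 * \<gamma>2 * (2 / \<sigma>21) * \<delta> + \<mu> * Q_rem_max) / (\<gamma>1 * \<gamma>2 * (rl * wl) * (\<gamma>1 * \<gamma>2 * (sl * wl2)))"
proof -
  note C = Q_estimates[OF \<mu> AB r s rl wl sl wl2 dlt]
  have rr: "0 \<le> r" "r \<le> A \<mu>" "r \<le> B \<mu>" using r by auto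
  have ss: "0 \<le> s" "s \<le> A \<mu>" "s \<le> B \<mu>" using s by auto
  have d1: "0 < \<gamma>1 * \<gamma>2 * (rl * wl)" using \<gamma>1 \<gamma>2 rl wl by simp
  have d2: "0 < \<gamma>1 * \<gamma>2 * (sl * wl2)" using \<gamma>1 \<gamma>2 sl wl2 by simp
  have Qs: "Q_main \<mu> s > 0" using C(2) d2 by linarith
  have bv: "(s + \<sigma>21 * (1 - s)) / (\<gamma>2 * \<sigma>21) * (1 - 1 / A \<mu> * s) = N2_main \<mu> s / Q_main \<mu> s"
  proof -
    have "N2_main \<mu> s * (\<gamma>2 * \<sigma>21 * A \<mu>) = (s + \<sigma>21 * (1 - s)) * (A \<mu> - s) * Q_main \<mu> s"
      using N2_main_identity[of \<mu> s] Fs by simp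
    thus ?thesis using Qs AB \<gamma>2 \<sigma>21_pos by (simp add: field_simps)
  qed
  have n1: "0 \<le> (1 - r) * (A \<mu> - r) * (B \<mu> - r) \<and> (1 - r) * (A \<mu> - r) * (B \<mu> - r) \<le> 1"
    using r AB by (intro mult3_unit_interval) auto
  have "\<bar>(1 - r) * X2 \<mu> r - N2_main \<mu> s\<bar> = \<bar>(N2_main \<mu> r - N2_main \<mu> s) + \<mu> * ((1 - r) * (A \<mu> - r) * (B \<mu> - r) / \<sigma>12)\<bar>"
    unfolding N2_split by simp
  also have "\<dots> \<le> 5 * \<gamma>1 / \<sigma>21 * \<delta> + \<mu> * (1 / \<sigma>21)"
  proof -
    have "\<bar>N2_main \<mu> r - N2_main \<mu> s\<bar> \<le> 5 * \<gamma>1 / \<sigma>21 * \<delta>"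
      using N2_main_lipschitz[OF rr ss AB(2,4)] dlt \<gamma>1 \<sigma>21_pos
        by (smt (verit) mult_left_mono divide_nonneg_pos)
    moreover have "\<bar>\<mu> * ((1 - r) * (A \<mu> - r) * (B \<mu> - r) / \<sigma>12)\<bar> \<le> \<mu> * (1 / \<sigma>21)"
    proof -
      have "(1 - r) * (A \<mu> - r) * (B \<mu> - r) / \<sigma>12 \<le> 1 / \<sigma>12"
        using n1 \<sigma>12_pos by (simp add: divide_right_mono)
      also have "\<dots> \<le> 1 / \<sigma>21" by (rule inv_\<sigma>12_le_inv_\<sigma>21)
      finally have "(1 - r) * (A \<mu> - r) * (B \<mu> - r) / \<sigma>12 \<le> 1 / \<sigma>21" .
      moreover have "0 \<le> (1 - r) * (A \<mu> - r) * (B \<mu> - r) / \<sigma>12" using n1 \<sigma>12_pos by simp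
      ultimately show ?thesis using abs_mult_le_nonneg[OF \<mu>(1)] by blast
    qed
    ultimately show ?thesis by (rule order_trans[OF abs_triangle_ineq add_mono])
  qed
  finally have a: "\<bar>(1 - r) * X2 \<mu> r - N2_main \<mu> s\<bar> \<le> 5 * \<gamma>1 / \<sigma>21 * \<delta> + \<mu> * (1 / \<sigma>21)" .
  have n: "\<bar>N2_main \<mu> s\<bar> \<le> 2 * \<gamma>1 / \<sigma>21" using N2_main_bounds[OF ss AB(2,4)] by simp
  show ?thesis unfolding bv using abs_diff_divide_le[OF C(1) d1 C(2) d2 a C(3) n] .
qed

section \<open>Asymptotics of the coexistence steady state\<close>

definition margin :: real where "margin = (1 - max (A 0) (B 0)) / 2"
definition C_root :: real where "C_root = F_rem_max / (\<gamma>1 * \<gamma>2 * A 0 * B 0)"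
definition s_low :: real where "s_low = \<sigma>12 * \<sigma>21 * A 0 * B 0 / 4"
definition gap_low :: real where "gap_low = 3 * margin * \<sigma>21 * s_low / 4"
definition mu_small :: real where
  "mu_small = min 1 (min (margin * min \<beta>1 \<beta>2) (min (s_low / (2 * C_root)) (gap_low / (4 * C_root))))"

text \<open>\<open>K1\<close>, \<open>K2\<close> are the bounds of I1_ratio_estimate, I2_ratio_estimate
  evaluated at the lower bounds of root_estimates, divided by \<open>\<mu>\<close>.\<close>

definition K1 :: real where
  "K1 = (5 * \<gamma>2 / \<sigma>21 * C_root + 1 / \<sigma>21) / (\<gamma>1 * \<gamma>2 * (s_low / 2 * (gap_low / 2)))
    + 2 * \<gamma>2 / \<sigma>21 * (\<gamma>1 * \<gamma>2 * (2 / \<sigma>21) * C_root + Q_rem_max)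
      / (\<gamma>1 * \<gamma>2 * (s_low / 2 * (gap_low / 2)) * (\<gamma>1 * \<gamma>2 * (s_low * gap_low)))"
definition K2 :: real where
  "K2 = (5 * \<gamma>1 / \<sigma>21 * C_root + 1 / \<sigma>21) / (\<gamma>1 * \<gamma>2 * (s_low / 2 * (gap_low / 2)))
    + 2 * \<gamma>1 / \<sigma>21 * (\<gamma>1 * \<gamma>2 * (2 / \<sigma>21) * C_root + Q_rem_max)
      / (\<gamma>1 * \<gamma>2 * (s_low / 2 * (gap_low / 2)) * (\<gamma>1 * \<gamma>2 * (s_low * gap_low)))"

lemma A_B_eq: "A \<mu> = A 0 + \<mu> / \<beta>1" "B \<mu> = B 0 + \<mu> / \<beta>2"
  by (simp_all add: A_def B_def add_divide_distrib)

context
  assumes A0: "A 0 < 1" and B0: "B 0 < 1"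
begin

lemma small_regime_constants_pos: "margin > 0" "C_root > 0" "s_low > 0" "gap_low > 0" "mu_small > 0"
proof -
  have AB0: "A 0 > 0" "B 0 > 0" using A_pos B_pos by auto
  show m: "margin > 0" using A0 B0 by (simp add: margin_def)
  have "F_rem_max > 0" unfolding F_rem_max_def using \<gamma>1 \<gamma>2 \<sigma>21_pos by (simp add: add_pos_pos)
  thus C: "C_root > 0" unfolding C_root_def using \<gamma>1 \<gamma>2 AB0 by simp
  show s: "s_low > 0" unfolding s_low_def using \<sigma>12_pos \<sigma>21_pos AB0 by simp
  show g: "gap_low > 0" unfolding gap_low_def using m \<sigma>21_pos s by simp
  show "mu_small > 0" unfolding mu_small_def using m C s g \<beta>1 \<beta>2 by simp
qed

lemma A_B_le_1_minus_margin:
  assumes "0 \<le> \<mu>" "\<mu> \<le> mu_small"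
  shows "A \<mu> \<le> 1 - margin" "B \<mu> \<le> 1 - margin"
proof -
  have "\<mu> \<le> margin * \<beta>1" "\<mu> \<le> margin * \<beta>2"
    using assms small_regime_constants_pos(1) \<beta>1 \<beta>2 unfolding mu_small_def
    by (smt (verit, best) min.cobounded1 min.cobounded2 mult_left_mono)+
  hence "\<mu> / \<beta>1 \<le> margin" "\<mu> / \<beta>2 \<le> margin" using \<beta>1 \<beta>2 by (simp_all add: divide_le_eq mult.commute)
  moreover have "A 0 \<le> 1 - 2 * margin" "B 0 \<le> 1 - 2 * margin" unfolding margin_def by (auto simp: max_def field_simps)
  ultimately show "A \<mu> \<le> 1 - margin" "B \<mu> \<le> 1 - margin" using A_B_eq[of \<mu>] by linarith+
qed

lemma root_estimates:
  assumes \<mu>: "0 < \<mu>" "\<mu> \<le> mu_small" and Om: "Omega \<mu> \<gamma>1 \<gamma>2 \<sigma>12 \<sigma>21 (1 / A \<mu>) (1 / B \<mu>)"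
    and r: "0 < r" "r < A \<mu>" "r < B \<mu>" "F \<mu> r = 0"
    and s: "s = s0 \<sigma>12 \<sigma>21 (1 / A \<mu>) (1 / B \<mu>)"
  shows "0 < s \<and> s < A \<mu> \<and> s < B \<mu> \<and> F_main \<mu> s = 0"
    and "\<bar>r - s\<bar> \<le> C_root * \<mu>" and "s_low \<le> s" and "gap_low \<le> (A \<mu> - s) + (B \<mu> - s)"
    and "s_low / 2 \<le> r" and "gap_low / 2 \<le> (A \<mu> - r) + (B \<mu> - r)"
proof -
  note pos = small_regime_constants_pos
  have \<mu>0: "0 \<le> \<mu>" and \<mu>1: "\<mu> \<le> 1" using \<mu> by (auto simp: mu_small_def)
  note Aup = A_B_le_1_minus_margin[OF \<mu>0 \<mu>(2)]
  have AB: "0 < A \<mu>" "A \<mu> \<le> 1" "0 < B \<mu>" "B \<mu> \<le> 1" using A_pos B_pos \<mu>0 Aup pos(1) by auto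
  have AB0: "0 < A 0" "A 0 \<le> A \<mu>" "0 < B 0" "B 0 \<le> B \<mu>"
    using A_pos B_pos \<mu>0 \<beta>1 \<beta>2 unfolding A_B_eq(1)[of \<mu>] A_B_eq(2)[of \<mu>] by auto
  show sp: "0 < s \<and> s < A \<mu> \<and> s < B \<mu> \<and> F_main \<mu> s = 0"
    using s0_props[OF \<mu>0] Om Omega_iff_F_pos[OF \<mu>(1)] unfolding s by auto
  have s1: "s \<le> 1" using sp AB by linarith
  have "\<gamma>1 * \<gamma>2 * A 0 * B 0 * \<bar>r - s\<bar> \<le> \<gamma>1 * \<gamma>2 * A \<mu> * B \<mu> * \<bar>r - s\<bar>"
    using AB0 \<gamma>1 \<gamma>2 by (intro mult_right_mono mult_left_mono mult_mono) auto
  also have "\<dots> \<le> \<mu> * F_rem_max"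
    using F_root_near_F_main_root[OF \<mu>0 \<mu>1 _ _ _ _ s1 AB r(4)] r sp by auto
  finally show dS: "\<bar>r - s\<bar> \<le> C_root * \<mu>"
    unfolding C_root_def using \<gamma>1 \<gamma>2 AB0 by (simp add: field_simps)
  have "\<sigma>12 * \<sigma>21 * A 0 * B 0 \<le> \<sigma>12 * \<sigma>21 * A \<mu> * B \<mu>"
    using AB0 \<sigma>12_pos \<sigma>21_pos by (intro mult_left_mono mult_mono) auto
  also have "\<dots> \<le> 4 * s" using F_main_root_lower[OF _ s1 _ AB] sp by auto
  finally show sls: "s_low \<le> s" unfolding s_low_def by simp
  have "3 * margin * \<sigma>21 * s_low \<le> 3 * margin * \<sigma>21 * s" using sls pos(1) \<sigma>21_pos by simp
  also have "\<dots> \<le> 4 * ((A \<mu> - s) + (B \<mu> - s))"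
    using F_main_root_gap_lower[OF _ _ _ _ Aup pos(1)] sp by auto
  finally show wls: "gap_low \<le> (A \<mu> - s) + (B \<mu> - s)" unfolding gap_low_def by simp
  have "C_root * \<mu> \<le> s_low / 2" "C_root * \<mu> \<le> gap_low / 4"
    using \<mu>(2) pos(2) unfolding mu_small_def by (simp_all add: field_simps)
  thus "s_low / 2 \<le> r" "gap_low / 2 \<le> (A \<mu> - r) + (B \<mu> - r)"
    using dS sls wls by (simp_all add: abs_le_iff)
qed

lemma I_estimates:
  assumes \<mu>: "0 < \<mu>" "\<mu> \<le> mu_small" and Om: "Omega \<mu> \<gamma>1 \<gamma>2 \<sigma>12 \<sigma>21 (1 / A \<mu>) (1 / B \<mu>)"
    and r: "0 < r" "r < A \<mu>" "r < B \<mu>" "F \<mu> r = 0"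
    and s: "s = s0 \<sigma>12 \<sigma>21 (1 / A \<mu>) (1 / B \<mu>)"
  shows "\<bar>I1_at \<mu> r - \<mu> * ((s + \<sigma>12 * (1 - s)) / (\<gamma>1 * \<sigma>12) * (1 - 1 / B \<mu> * s))\<bar> \<le> K1 * \<mu>^2"
    and "\<bar>I2_at \<mu> r - \<mu> * ((s + \<sigma>21 * (1 - s)) / (\<gamma>2 * \<sigma>21) * (1 - 1 / A \<mu> * s))\<bar> \<le> K2 * \<mu>^2"
proof -
  note pos = small_regime_constants_pos
  note est = root_estimates[OF assms]
  have \<mu>0: "0 \<le> \<mu>" and \<mu>1: "\<mu> \<le> 1" using \<mu> by (auto simp: mu_small_def)
  note Aup = A_B_le_1_minus_margin[OF \<mu>0 \<mu>(2)]
  have AB: "0 < A \<mu>" "A \<mu> \<le> 1" "0 < B \<mu>" "B \<mu> \<le> 1" using A_pos B_pos \<mu>0 Aup pos(1) by auto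
  have lows: "0 < s_low / 2" "0 < gap_low / 2" using pos by simp_all
  have d: "0 < \<gamma>1 * \<gamma>2 * (s_low / 2 * (gap_low / 2))" "0 < \<gamma>1 * \<gamma>2 * (s_low * gap_low)"
    using \<gamma>1 \<gamma>2 pos by simp_all
  have "\<bar>(1 - r) * X1 \<mu> r / Q \<mu> r - (s + \<sigma>12 * (1 - s)) / (\<gamma>1 * \<sigma>12) * (1 - 1 / B \<mu> * s)\<bar> \<le> K1 * \<mu>"
    using I1_ratio_estimate[OF \<mu>0 \<mu>1 AB r(1-3) _ _ _ _ est(5) lows(1) est(6) lows(2) est(3) pos(3)
        est(4) pos(4) est(2)] est(1) d
    by (simp add: K1_def field_simps)
  moreover have "\<bar>(1 - r) * X2 \<mu> r / Q \<mu> r - (s + \<sigma>21 * (1 - s)) / (\<gamma>2 * \<sigma>21) * (1 - 1 / A \<mu> * s)\<bar> \<le> K2 * \<mu>"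
    using I2_ratio_estimate[OF \<mu>0 \<mu>1 AB r(1-3) _ _ _ _ est(5) lows(1) est(6) lows(2) est(3) pos(3)
        est(4) pos(4) est(2)] est(1) d
    by (simp add: K2_def field_simps)
  moreover have "\<bar>\<mu> * x / y - \<mu> * z\<bar> = \<mu> * \<bar>x / y - z\<bar>" for x y z
  proof -
    have "\<mu> * x / y - \<mu> * z = \<mu> * (x / y - z)" by (simp add: algebra_simps)
    thus ?thesis using \<mu>0 by (simp add: abs_mult)
  qed
  ultimately show "\<bar>I1_at \<mu> r - \<mu> * ((s + \<sigma>12 * (1 - s)) / (\<gamma>1 * \<sigma>12) * (1 - 1 / B \<mu> * s))\<bar> \<le> K1 * \<mu>^2"
    and "\<bar>I2_at \<mu> r - \<mu> * ((s + \<sigma>21 * (1 - s)) / (\<gamma>2 * \<sigma>21) * (1 - 1 / A \<mu> * s))\<bar> \<le> K2 * \<mu>^2"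
    unfolding I1_at_def I2_at_def power2_eq_square mult.assoc
    using mult_left_mono[OF _ \<mu>0] by (metis mult.left_commute)+
qed

end

definition expansion_within :: "real \<Rightarrow> real \<Rightarrow> real \<Rightarrow> real \<Rightarrow> real \<Rightarrow> bool" where
  "expansion_within C \<mu> S I1 I2 \<longleftrightarrow>
     (let s = s0 \<sigma>12 \<sigma>21 (1 / A \<mu>) (1 / B \<mu>)
      in \<bar>S - s\<bar> \<le> C * \<mu> \<and>
         \<bar>I1 - \<mu> * ((s + \<sigma>12 * (1 - s)) / (\<gamma>1 * \<sigma>12) * (1 - 1 / B \<mu> * s))\<bar> \<le> C * \<mu>^2 \<and>
         \<bar>I2 - \<mu> * ((s + \<sigma>21 * (1 - s)) / (\<gamma>2 * \<sigma>21) * (1 - 1 / A \<mu> * s))\<bar> \<le> C * \<mu>^2)"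

lemma eventually_root_expansion:
  "\<exists>C. eventually (\<lambda>\<mu>. \<forall>r. Omega \<mu> \<gamma>1 \<gamma>2 \<sigma>12 \<sigma>21 (1 / A \<mu>) (1 / B \<mu>) \<and>
      0 < r \<and> r < A \<mu> \<and> r < B \<mu> \<and> F \<mu> r = 0 \<longrightarrow> expansion_within C \<mu> r (I1_at \<mu> r) (I2_at \<mu> r))
    (at_right 0)"
proof (cases "A 0 < 1 \<and> B 0 < 1")
  case True
  define C where "C = max C_root (max K1 K2)"
  have "eventually (\<lambda>\<mu>. 0 < \<mu> \<and> \<mu> < mu_small) (at_right 0)"
    using small_regime_constants_pos(5) True eventually_at_right_field by blast
  hence "eventually (\<lambda>\<mu>. \<forall>r. Omega \<mu> \<gamma>1 \<gamma>2 \<sigma>12 \<sigma>21 (1 / A \<mu>) (1 / B \<mu>) \<and>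
      0 < r \<and> r < A \<mu> \<and> r < B \<mu> \<and> F \<mu> r = 0 \<longrightarrow> expansion_within C \<mu> r (I1_at \<mu> r) (I2_at \<mu> r))
    (at_right 0)"
  proof eventually_elim
    case (elim \<mu>)
    have le_C: "X \<le> K * t \<Longrightarrow> K \<le> C \<Longrightarrow> 0 \<le> t \<Longrightarrow> X \<le> C * t" for X K t
      by (meson mult_right_mono order_trans)
    show ?case
    proof (intro allI impI)
      fix r assume H: "Omega \<mu> \<gamma>1 \<gamma>2 \<sigma>12 \<sigma>21 (1 / A \<mu>) (1 / B \<mu>) \<and>
        0 < r \<and> r < A \<mu> \<and> r < B \<mu> \<and> F \<mu> r = 0"
      have \<mu>: "0 < \<mu>" "\<mu> \<le> mu_small" using elim by auto
      note est = root_estimates(2)[OF True[THEN conjunct1] True[THEN conjunct2] \<mu> _ _ _ _ _ refl]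
        I_estimates[OF True[THEN conjunct1] True[THEN conjunct2] \<mu> _ _ _ _ _ refl]
      show "expansion_within C \<mu> r (I1_at \<mu> r) (I2_at \<mu> r)"
        unfolding expansion_within_def Let_def
        using est[of r] H \<mu> by (intro conjI le_C) (auto simp: C_def)
    qed
  qed
  thus ?thesis by blast
next
  case False
  have "eventually (\<lambda>\<mu>. \<mu> > 0) (at_right (0::real))" by (rule eventually_at_right_less)
  hence "eventually (\<lambda>\<mu>. \<not> Omega \<mu> \<gamma>1 \<gamma>2 \<sigma>12 \<sigma>21 (1 / A \<mu>) (1 / B \<mu>)) (at_right 0)"
  proof eventually_elim
    case (elim \<mu>)
    have "A 0 \<le> A \<mu>" "B 0 \<le> B \<mu>" using A_B_eq[of \<mu>] elim \<beta>1 \<beta>2 by simp_all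
    thus ?case using Omega_iff_F_pos[OF elim] False by auto
  qed
  thus ?thesis by (auto elim: eventually_mono)
qed

lemma endemic_asymptotics:
  "\<exists>C. eventually (\<lambda>\<mu>.
      (Omega \<mu> \<gamma>1 \<gamma>2 \<sigma>12 \<sigma>21 (1 / A \<mu>) (1 / B \<mu>) \<longrightarrow>
        (\<exists>!x. endemic \<mu> x) \<and>
        (\<forall>x. endemic \<mu> x \<longrightarrow> expansion_within C \<mu> (S_of x) (I1_of x) (I2_of x))) \<and>
      (\<not> Omega \<mu> \<gamma>1 \<gamma>2 \<sigma>12 \<sigma>21 (1 / A \<mu>) (1 / B \<mu>) \<longrightarrow> \<not> (\<exists>x. endemic \<mu> x)))
    (at_right 0)"
proof -
  obtain C where C: "eventually (\<lambda>\<mu>. \<forall>r. Omega \<mu> \<gamma>1 \<gamma>2 \<sigma>12 \<sigma>21 (1 / A \<mu>) (1 / B \<mu>) \<and>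
      0 < r \<and> r < A \<mu> \<and> r < B \<mu> \<and> F \<mu> r = 0 \<longrightarrow> expansion_within C \<mu> r (I1_at \<mu> r) (I2_at \<mu> r))
    (at_right 0)"
    using eventually_root_expansion by blast
  have "eventually (\<lambda>\<mu>. \<mu> > 0) (at_right (0::real))" by (rule eventually_at_right_less)
  with C eventually_F_crosses_zero
  have "eventually (\<lambda>\<mu>.
      (Omega \<mu> \<gamma>1 \<gamma>2 \<sigma>12 \<sigma>21 (1 / A \<mu>) (1 / B \<mu>) \<longrightarrow>
        (\<exists>!x. endemic \<mu> x) \<and>
        (\<forall>x. endemic \<mu> x \<longrightarrow> expansion_within C \<mu> (S_of x) (I1_of x) (I2_of x))) \<and>
      (\<not> Omega \<mu> \<gamma>1 \<gamma>2 \<sigma>12 \<sigma>21 (1 / A \<mu>) (1 / B \<mu>) \<longrightarrow> \<not> (\<exists>x. endemic \<mu> x)))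
    (at_right 0)"
  proof eventually_elim
    case (elim \<mu>)
    then obtain r where r: "crosses_zero_at (F \<mu>) r" and \<mu>: "\<mu> > 0" by blast
    note Om = Omega_iff_crosses_below[OF \<mu> r] and endemic = endemic_iff_crossing[OF \<mu> r]
    have "F \<mu> r = 0" if "r < 1" using r that unfolding crosses_zero_at_def by auto
    with elim Om endemic r show ?case unfolding crosses_zero_at_def by auto
  qed
  thus ?thesis by blast
qed

end

theorem proposition4p1:
  fixes \<beta>1 \<beta>2 \<gamma>1 \<gamma>2 \<sigma>12 \<sigma>21 :: real
  assumes "\<beta>1 > 0" "\<beta>2 > 0" "\<gamma>1 > 0" "\<gamma>2 > 0"
    and "0 < \<sigma>21" "\<sigma>21 \<le> \<sigma>12" "\<sigma>12 \<le> 1"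
  shows "\<exists>\<mu>s. 0 < \<mu>s \<and> \<mu>s < min \<gamma>1 \<gamma>2 \<and>
    (\<exists>C. \<forall>\<mu>. 0 < \<mu> \<and> \<mu> < \<mu>s \<longrightarrow>
      (let R1 = repr_num \<beta>1 \<gamma>1 \<mu>; R2 = repr_num \<beta>2 \<gamma>2 \<mu>;
           s = s0 \<sigma>12 \<sigma>21 R1 R2;
           b1 = (s + \<sigma>12 * (1 - s)) / (\<gamma>1 * \<sigma>12) * (1 - R2 * s);
           b2 = (s + \<sigma>21 * (1 - s)) / (\<gamma>2 * \<sigma>21) * (1 - R1 * s)
       in (Omega \<mu> \<gamma>1 \<gamma>2 \<sigma>12 \<sigma>21 R1 R2 \<longrightarrow>
             (\<exists>!x. steady_state \<beta>1 \<beta>2 \<gamma>1 \<gamma>2 \<sigma>12 \<sigma>21 \<mu> x \<and> feasible x \<and>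
                    I1_of x > 0 \<and> I2_of x > 0) \<and>
             (\<forall>x. steady_state \<beta>1 \<beta>2 \<gamma>1 \<gamma>2 \<sigma>12 \<sigma>21 \<mu> x \<and> feasible x \<and>
                    I1_of x > 0 \<and> I2_of x > 0 \<longrightarrow>
                \<bar>S_of x - s\<bar> \<le> C * \<mu> \<and>
                \<bar>I1_of x - \<mu> * b1\<bar> \<le> C * \<mu>\<^sup>2 \<and>
                \<bar>I2_of x - \<mu> * b2\<bar> \<le> C * \<mu>\<^sup>2)) \<and>
          (\<not> Omega \<mu> \<gamma>1 \<gamma>2 \<sigma>12 \<sigma>21 R1 R2 \<longrightarrow>
             \<not> (\<exists>x. steady_state \<beta>1 \<beta>2 \<gamma>1 \<gamma>2 \<sigma>12 \<sigma>21 \<mu> x \<and> feasible x \<and>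
                    I1_of x > 0 \<and> I2_of x > 0))))"
proof -
  interpret two_strain \<beta>1 \<beta>2 \<gamma>1 \<gamma>2 \<sigma>12 \<sigma>21 using assms by unfold_locales
  obtain C where "eventually (\<lambda>\<mu>.
      (Omega \<mu> \<gamma>1 \<gamma>2 \<sigma>12 \<sigma>21 (1 / A \<mu>) (1 / B \<mu>) \<longrightarrow>
        (\<exists>!x. endemic \<mu> x) \<and>
        (\<forall>x. endemic \<mu> x \<longrightarrow> expansion_within C \<mu> (S_of x) (I1_of x) (I2_of x))) \<and>
      (\<not> Omega \<mu> \<gamma>1 \<gamma>2 \<sigma>12 \<sigma>21 (1 / A \<mu>) (1 / B \<mu>) \<longrightarrow> \<not> (\<exists>x. endemic \<mu> x)))
    (at_right 0)"
    using endemic_asymptotics by blast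
  then obtain \<mu>0 where "\<mu>0 > 0" and small: "\<And>\<mu>. 0 < \<mu> \<Longrightarrow> \<mu> < \<mu>0 \<Longrightarrow>
      (Omega \<mu> \<gamma>1 \<gamma>2 \<sigma>12 \<sigma>21 (1 / A \<mu>) (1 / B \<mu>) \<longrightarrow>
        (\<exists>!x. endemic \<mu> x) \<and>
        (\<forall>x. endemic \<mu> x \<longrightarrow> expansion_within C \<mu> (S_of x) (I1_of x) (I2_of x))) \<and>
      (\<not> Omega \<mu> \<gamma>1 \<gamma>2 \<sigma>12 \<sigma>21 (1 / A \<mu>) (1 / B \<mu>) \<longrightarrow> \<not> (\<exists>x. endemic \<mu> x))"
    unfolding eventually_at_right_field by auto
  show ?thesis
  proof (rule exI[of _ "min \<mu>0 (min \<gamma>1 \<gamma>2 / 2)"], intro conjI exI[of _ C] allI impI)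
    show "0 < min \<mu>0 (min \<gamma>1 \<gamma>2 / 2)" "min \<mu>0 (min \<gamma>1 \<gamma>2 / 2) < min \<gamma>1 \<gamma>2"
      using \<open>\<mu>0 > 0\<close> \<gamma>1 \<gamma>2 by auto
  qed (use small repr_num_eq in \<open>auto simp: Let_def endemic_def expansion_within_def\<close>)
qed

end
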